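(* Let $n\ge 1$ and let $k_1<k_2<\cdots<k_n$ be integers. Then the number of monotone triangles with $n$ rows and bottom row $(k_1,\ldots,k_n)$ is equal to the value at $(x_1,\ldots,x_n)=(k_1,\ldots,k_n)$ of the polynomial $$\left( \prod_{1 \le p < q \le n} \left(\operatorname{id} + E_{x_q} \Delta_{x_p}\right)^{-1} \right) \prod_{1 \le i < j \le n} \frac{x_j - x_i}{j-i}.$$
   Context: A monotone triangle with $n$ rows is a triangular array $(a_{i,j})_{1\le j\le i\le n}$ of integers such that $a_{i,j}\le a_{i-1,j}\le a_{i,j+1}$ and $a_{i,j}<a_{i,j+1}$ whenever the indices are in range; its bottom row is $(a_{n,1},\ldots,a_{n,n})$. For a variable $x$, $E_x$ is the shift operator on polynomials, $E_x\,p(x)=p(x+1)$, and $\Delta_x=E_x-\operatorname{id}$. Products of operators denote composition (all these operators commute). On the polynomial ring $\mathbb{C}[x_1,\ldots,x_n]$ the operator $\operatorname{id}+E_{x_q}\Delta_{x_p}$ is invertible, with inverse $\sum_{l\ge 0}(-1)^l E_{x_q}^l\Delta_{x_p}^l$ (a finite sum on each polynomial). *)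

theory Defs
  imports Complex_Main
begin

text \<open>Polynomials in x_1,...,x_n are represented by the polynomial functions they induce
  on complex points; a point is a map nat => complex (coordinate i is x_i).\<close>

definition shiftE :: "nat \<Rightarrow> ((nat \<Rightarrow> complex) \<Rightarrow> complex) \<Rightarrow> ((nat \<Rightarrow> complex) \<Rightarrow> complex)" where
  "shiftE p f = (\<lambda>x. f (x(p := x p + 1)))"

definition diffD :: "nat \<Rightarrow> ((nat \<Rightarrow> complex) \<Rightarrow> complex) \<Rightarrow> ((nat \<Rightarrow> complex) \<Rightarrow> complex)" where
  "diffD p f = (\<lambda>x. shiftE p f x - f x)"

text \<open>Inverse of id + E_q Delta_p: the series sum_l (-1)^l E_q^l Delta_p^l, which is a finite
  sum on polynomials since Delta_p^l f = 0 for all large l.\<close>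
definition inv_op :: "nat \<Rightarrow> nat \<Rightarrow> ((nat \<Rightarrow> complex) \<Rightarrow> complex) \<Rightarrow> ((nat \<Rightarrow> complex) \<Rightarrow> complex)" where
  "inv_op p q f = (let N = (LEAST N. \<forall>l\<ge>N. (diffD p ^^ l) f = (\<lambda>_. 0)) in
     (\<lambda>x. \<Sum>l<N. (-1)^l * ((shiftE q ^^ l) ((diffD p ^^ l) f)) x))"

definition all_inv_ops :: "nat \<Rightarrow> ((nat \<Rightarrow> complex) \<Rightarrow> complex) \<Rightarrow> ((nat \<Rightarrow> complex) \<Rightarrow> complex)" where
  "all_inv_ops n = foldr (\<lambda>(p, q) g. inv_op p q \<circ> g)
      [(p, q). q \<leftarrow> [1..<n+1], p \<leftarrow> [1..<q]] id"

definition vdm_poly :: "nat \<Rightarrow> (nat \<Rightarrow> complex) \<Rightarrow> complex" where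
  "vdm_poly n = (\<lambda>x. \<Prod>j\<in>{1..n}. \<Prod>i\<in>{1..<j}. (x j - x i) / (of_nat j - of_nat i))"

definition monotone_triangle :: "nat \<Rightarrow> (nat \<Rightarrow> nat \<Rightarrow> int) \<Rightarrow> bool" where
  "monotone_triangle n a \<longleftrightarrow>
     (\<forall>i j. \<not> (1 \<le> j \<and> j \<le> i \<and> i \<le> n) \<longrightarrow> a i j = 0) \<and>
     (\<forall>i j. 2 \<le> i \<and> i \<le> n \<and> 1 \<le> j \<and> j < i \<longrightarrow>
         a i j \<le> a (i - 1) j \<and> a (i - 1) j \<le> a i (j + 1)) \<and>
     (\<forall>i j. i \<le> n \<and> 1 \<le> j \<and> j < i \<longrightarrow> a i j < a i (j + 1))"

definition monotone_triangles :: "nat \<Rightarrow> (nat \<Rightarrow> int) \<Rightarrow> (nat \<Rightarrow> nat \<Rightarrow> int) set" where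
  "monotone_triangles n k = {a. monotone_triangle n a \<and> (\<forall>j\<in>{1..n}. a n j = k j)}"

end

theory Submission
  imports Defs "Jordan_Normal_Form.Determinant"
begin

text \<open>
  Write V_n for the normalised Vandermonde product and A_n for the composition of all
  (id + E_q Delta_p)^(-1), 1 <= p < q <= n. Deleting the bottom row of a monotone triangle shows that
  the number of triangles satisfies f_(n+1)(k) = sum of f_n(l) over the rows l interlacing k, so it
  suffices to show the same recursion for A_n V_n evaluated at integer points.

  V_n is Delta_1 ... Delta_n applied to a determinant U_n of binomial coefficients, and all the
  operators commute. Hence, with G = A_n U_n, summing A_n V_n = Delta_1 ... Delta_n G over the rows
  interlacing k telescopes to an alternating sum of values of G (summation lemma); the boundary terms
  cancel in pairs because (id + E_(i+1) Delta_i) G is antisymmetric in x_i, x_(i+1). The same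
  alternating sum arises from A_(n+1) V_(n+1) by Laplace expansion of V_(n+1) along its column of
  ones: on a minor, which does not depend on the deleted variable x_s, the factors for the pairs
  (s, q) act trivially and those for the pairs (p, s) as E_p^(-1).

  The inverse operators are realised by truncations of their series, which is exact on functions
  of bounded degree.
\<close>

type_synonym cfun = "(nat \<Rightarrow> complex) \<Rightarrow> complex"

section \<open>Linear and shift-invariant operators\<close>

definition linear_op :: "(cfun \<Rightarrow> cfun) \<Rightarrow> bool" where
  "linear_op L \<longleftrightarrow> (\<forall>f g. L (\<lambda>x. f x + g x) = (\<lambda>x. L f x + L g x)) \<and>
                    (\<forall>c f. L (\<lambda>x. c * f x) = (\<lambda>x. c * L f x))"

lemma linear_op_add: "linear_op L \<Longrightarrow> L (\<lambda>x. f x + g x) = (\<lambda>x. L f x + L g x)"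
  by (simp add: linear_op_def)

lemma linear_op_cmult: "linear_op L \<Longrightarrow> L (\<lambda>x. c * f x) = (\<lambda>x. c * L f x)"
  by (simp add: linear_op_def)

lemma linear_op_zero: "linear_op L \<Longrightarrow> L (\<lambda>x. 0) = (\<lambda>x. 0)"
  using linear_op_cmult[of L 0 "\<lambda>x. 0"] by simp

lemma linear_op_diff: "linear_op L \<Longrightarrow> L (\<lambda>x. f x - g x) = (\<lambda>x. L f x - L g x)"
  using linear_op_add[of L f "\<lambda>x. (-1) * g x"] linear_op_cmult[of L "-1" g] by simp

lemma linear_op_sum: "linear_op L \<Longrightarrow> L (\<lambda>x. \<Sum>i\<in>A. f i x) = (\<lambda>x. \<Sum>i\<in>A. L (f i) x)"
proof (induction A rule: infinite_finite_induct)
  case (insert a A)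
  then show ?case by (simp add: linear_op_add[OF insert.prems])
qed (simp_all add: linear_op_zero)

lemma linear_op_funpow_zero: "linear_op L \<Longrightarrow> (L ^^ n) (\<lambda>x. 0) = (\<lambda>x. 0)"
  by (induction n) (simp_all add: linear_op_zero)

lemma linear_op_comp: "linear_op L \<Longrightarrow> linear_op K \<Longrightarrow> linear_op (\<lambda>f. L (K f))"
  by (simp add: linear_op_def)

lemma linear_op_funpow: "linear_op L \<Longrightarrow> linear_op (L ^^ n)"
  by (induction n) (simp_all add: linear_op_def)

lemma linear_op_shiftE: "linear_op (shiftE p)"
  by (simp add: linear_op_def shiftE_def)

lemma linear_op_diffD: "linear_op (diffD p)"
  by (auto simp add: linear_op_def diffD_def shiftE_def algebra_simps)

definition shift_invariant :: "(cfun \<Rightarrow> cfun) \<Rightarrow> bool" where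
  "shift_invariant L \<longleftrightarrow> linear_op L \<and> (\<forall>r f. L (shiftE r f) = shiftE r (L f))"

lemma shift_invariant_linear_op: "shift_invariant L \<Longrightarrow> linear_op L"
  by (simp add: shift_invariant_def)

lemma shift_invariant_shiftE_commute: "shift_invariant L \<Longrightarrow> L (shiftE r f) = shiftE r (L f)"
  by (simp add: shift_invariant_def)

lemma shift_invariant_id: "shift_invariant (\<lambda>f. f)"
  by (simp add: shift_invariant_def linear_op_def)

lemma shift_invariant_comp:
  "shift_invariant L \<Longrightarrow> shift_invariant K \<Longrightarrow> shift_invariant (\<lambda>f. L (K f))"
  by (simp add: shift_invariant_def linear_op_comp)

lemma shiftE_commute: "shiftE p (shiftE q f) = shiftE q (shiftE p f)"
  by (cases "p = q") (auto simp: shiftE_def fun_upd_twist)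

lemma shift_invariant_shiftE: "shift_invariant (shiftE p)"
  by (simp add: shift_invariant_def linear_op_shiftE shiftE_commute)

lemma shift_invariant_diffD_commute: "shift_invariant L \<Longrightarrow> L (diffD p f) = diffD p (L f)"
  unfolding diffD_def
  by (simp add: linear_op_diff shift_invariant_linear_op shift_invariant_shiftE_commute)

lemma shift_invariant_diffD: "shift_invariant (diffD p)"
  using linear_op_diffD shift_invariant_diffD_commute[OF shift_invariant_shiftE]
  by (simp add: shift_invariant_def)

lemma funpow_commute: "(\<And>f. L (K f) = K (L f)) \<Longrightarrow> L ((K ^^ n) f) = (K ^^ n) (L f)"
  by (induction n arbitrary: f) auto

lemma shift_invariant_shiftE_pow_commute:
  "shift_invariant L \<Longrightarrow> L ((shiftE q ^^ n) f) = (shiftE q ^^ n) (L f)"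
  by (rule funpow_commute) (rule shift_invariant_shiftE_commute)

lemma shift_invariant_diffD_pow_commute:
  "shift_invariant L \<Longrightarrow> L ((diffD q ^^ n) f) = (diffD q ^^ n) (L f)"
  by (rule funpow_commute) (rule shift_invariant_diffD_commute)

section \<open>Truncations of the series for the inverse of id + E_q Delta_p\<close>

definition inv_series :: "nat \<Rightarrow> nat \<Rightarrow> nat \<Rightarrow> cfun \<Rightarrow> cfun" where
  "inv_series p q N f = (\<lambda>x. \<Sum>l<N. (-1)^l * (shiftE q ^^ l) ((diffD p ^^ l) f) x)"

lemma shift_invariant_inv_series_commute:
  assumes "shift_invariant L"
  shows "L (inv_series p q N f) = inv_series p q N (L f)"
proof -
  have L: "linear_op L" using assms by (rule shift_invariant_linear_op)
  have "L (inv_series p q N f) =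
      (\<lambda>x. \<Sum>l<N. (-1)^l * L ((shiftE q ^^ l) ((diffD p ^^ l) f)) x)"
    unfolding inv_series_def by (simp only: linear_op_sum[OF L] linear_op_cmult[OF L])
  also have "\<dots> = inv_series p q N (L f)"
    unfolding inv_series_def
    by (simp only: shift_invariant_shiftE_pow_commute[OF assms] shift_invariant_diffD_pow_commute[OF assms])
  finally show ?thesis .
qed

lemma linear_op_inv_series: "linear_op (inv_series p q N)"
proof -
  have add: "(shiftE q ^^ l) ((diffD p ^^ l) (\<lambda>x. f x + g x)) =
     (\<lambda>x. (shiftE q ^^ l) ((diffD p ^^ l) f) x + (shiftE q ^^ l) ((diffD p ^^ l) g) x)" for l f g
    by (simp only: linear_op_add[OF linear_op_funpow[OF linear_op_diffD]]
        linear_op_add[OF linear_op_funpow[OF linear_op_shiftE]])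
  have cmult: "(shiftE q ^^ l) ((diffD p ^^ l) (\<lambda>x. c * f x)) =
     (\<lambda>x. c * (shiftE q ^^ l) ((diffD p ^^ l) f) x)" for l f c
    by (simp only: linear_op_cmult[OF linear_op_funpow[OF linear_op_diffD]]
        linear_op_cmult[OF linear_op_funpow[OF linear_op_shiftE]])
  show ?thesis
    unfolding linear_op_def inv_series_def add cmult
    by (simp only: sum.distrib distrib_left sum_distrib_left mult.left_commute) simp
qed

lemma shift_invariant_inv_series: "shift_invariant (inv_series p q N)"
  using linear_op_inv_series shift_invariant_inv_series_commute[OF shift_invariant_shiftE]
  by (simp add: shift_invariant_def)

lemma inv_series_commute:
  "inv_series p q N (inv_series p' q' N' f) = inv_series p' q' N' (inv_series p q N f)"
  by (rule shift_invariant_inv_series_commute[OF shift_invariant_inv_series, symmetric])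

definition degree_below :: "nat \<Rightarrow> nat \<Rightarrow> cfun \<Rightarrow> bool" where
  "degree_below p N f \<longleftrightarrow> (diffD p ^^ N) f = (\<lambda>x. 0)"

definition degrees_below :: "nat \<Rightarrow> cfun \<Rightarrow> bool" where
  "degrees_below N f \<longleftrightarrow> (\<forall>p. degree_below p N f)"

lemma degree_below_mono:
  assumes "degree_below p N f" "N \<le> N'"
  shows "degree_below p N' f"
proof -
  have "N' = (N' - N) + N" using assms(2) by simp
  then have "(diffD p ^^ N') f = (diffD p ^^ (N' - N)) ((diffD p ^^ N) f)"
    by (metis comp_apply funpow_add)
  then show ?thesis
    using assms(1) linear_op_funpow_zero[OF linear_op_diffD] by (simp add: degree_below_def)
qed

lemma degrees_below_mono: "degrees_below N f \<Longrightarrow> N \<le> N' \<Longrightarrow> degrees_below N' f"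
  using degree_below_mono degrees_below_def by blast

lemma shift_invariant_degree_below:
  assumes "shift_invariant L" "degree_below p N f"
  shows "degree_below p N (L f)"
proof -
  have "(diffD p ^^ N) (L f) = L ((diffD p ^^ N) f)"
    using shift_invariant_diffD_pow_commute[OF assms(1)] by simp
  also have "\<dots> = (\<lambda>x. 0)"
    using assms linear_op_zero shift_invariant_linear_op by (simp add: degree_below_def)
  finally show ?thesis by (simp add: degree_below_def)
qed

lemma shift_invariant_degrees_below:
  "shift_invariant L \<Longrightarrow> degrees_below N f \<Longrightarrow> degrees_below N (L f)"
  using shift_invariant_degree_below degrees_below_def by blast

lemma inv_op_eq_inv_series:
  assumes "degree_below p N f"
  shows "inv_op p q f = inv_series p q N f"
proof -
  let ?P = "\<lambda>N. \<forall>l\<ge>N. (diffD p ^^ l) f = (\<lambda>_. 0)"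
  let ?a = "\<lambda>x l. (-1)^l * (shiftE q ^^ l) ((diffD p ^^ l) f) x"
  define N0 where "N0 = (LEAST N. ?P N)"
  have PN: "?P N" using degree_below_mono[OF assms] degree_below_def by blast
  have PN0: "?P N0" unfolding N0_def by (rule LeastI[of ?P N, OF PN])
  have N0: "N0 \<le> N" unfolding N0_def by (rule Least_le[of ?P N, OF PN])
  have "(\<Sum>l\<in>{N0..<N}. ?a x l) = 0" for x
    using PN0 linear_op_funpow_zero[OF linear_op_shiftE] by (intro sum.neutral) auto
  then have "(\<Sum>l<N. ?a x l) = (\<Sum>l<N0. ?a x l)" for x
    using N0 by (simp add: lessThan_atLeast0 sum.atLeastLessThan_concat[symmetric, of 0 N0 N])
  then show ?thesis unfolding inv_op_def inv_series_def N0_def[symmetric] Let_def by simp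
qed

definition id_plus_ED :: "nat \<Rightarrow> nat \<Rightarrow> cfun \<Rightarrow> cfun" where
  "id_plus_ED p q g = (\<lambda>x. g x + shiftE q (diffD p g) x)"

lemma id_plus_ED_inv_series:
  assumes "degree_below p N f"
  shows "id_plus_ED p q (inv_series p q N f) = f"
proof
  fix x
  define a where "a l = (-1)^l * (shiftE q ^^ l) ((diffD p ^^ l) f) x" for l
  have L: "linear_op (\<lambda>g. shiftE q (diffD p g))"
    by (rule linear_op_comp[OF linear_op_shiftE linear_op_diffD])
  have "shiftE q (diffD p (inv_series p q N f)) =
      (\<lambda>x. \<Sum>l<N. shiftE q (diffD p (\<lambda>x. (-1)^l * (shiftE q ^^ l) ((diffD p ^^ l) f) x)) x)"
    unfolding inv_series_def by (rule linear_op_sum[OF L])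
  also have "\<dots> = (\<lambda>x. \<Sum>l<N. (-1)^l * shiftE q (diffD p ((shiftE q ^^ l) ((diffD p ^^ l) f))) x)"
    by (simp only: linear_op_cmult[OF L])
  also have "\<dots> = (\<lambda>x. \<Sum>l<N. (-1)^l * (shiftE q ^^ Suc l) ((diffD p ^^ Suc l) f) x)"
  proof -
    have "diffD p ((shiftE q ^^ l) g) = (shiftE q ^^ l) (diffD p g)" for l g
      by (rule shift_invariant_shiftE_pow_commute[OF shift_invariant_diffD])
    then show ?thesis by simp
  qed
  finally have "shiftE q (diffD p (inv_series p q N f)) x = - (\<Sum>l<N. a (Suc l))"
    by (simp add: a_def sum_negf[symmetric])
  moreover have "inv_series p q N f x = (\<Sum>l<N. a l)" by (simp add: inv_series_def a_def)
  ultimately have "id_plus_ED p q (inv_series p q N f) x = (\<Sum>l<N. a l - a (Suc l))"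
    by (simp add: id_plus_ED_def sum_subtractf)
  also have "\<dots> = a 0 - a N" by (rule sum_lessThan_telescope')
  also have "a N = 0"
    using assms linear_op_funpow_zero[OF linear_op_shiftE] by (simp add: a_def degree_below_def)
  finally show "id_plus_ED p q (inv_series p q N f) x = f x" by (simp add: a_def)
qed

definition inv_series_list :: "nat \<Rightarrow> (nat \<times> nat) list \<Rightarrow> cfun \<Rightarrow> cfun" where
  "inv_series_list N ps = foldr (\<lambda>(p, q) g. inv_series p q N \<circ> g) ps id"

lemma inv_series_list_Nil [simp]: "inv_series_list N [] f = f"
  by (simp add: inv_series_list_def)

lemma inv_series_list_Cons:
  "inv_series_list N (a # ps) f = inv_series (fst a) (snd a) N (inv_series_list N ps f)"
  by (cases a) (simp add: inv_series_list_def)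

lemma inv_series_list_append:
  "inv_series_list N (ps @ qs) f = inv_series_list N ps (inv_series_list N qs f)"
  by (induction ps) (auto simp: inv_series_list_Cons)

lemma shift_invariant_inv_series_list: "shift_invariant (inv_series_list N ps)"
proof (induction ps)
  case Nil
  have "inv_series_list N [] = (\<lambda>f. f)" by (rule ext) simp
  then show ?case using shift_invariant_id by simp
next
  case (Cons a ps)
  have "inv_series_list N (a # ps) = (\<lambda>f. inv_series (fst a) (snd a) N (inv_series_list N ps f))"
    by (rule ext) (simp add: inv_series_list_Cons)
  then show ?case using shift_invariant_comp[OF shift_invariant_inv_series Cons.IH] by simp
qed

lemma inv_series_list_remove1:
  "a \<in> set ps \<Longrightarrow>
     inv_series_list N ps f = inv_series (fst a) (snd a) N (inv_series_list N (remove1 a ps) f)"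
proof (induction ps)
  case (Cons b ps)
  show ?case
  proof (cases "a = b")
    case False
    then have "inv_series_list N (b # ps) f =
        inv_series (fst b) (snd b) N (inv_series (fst a) (snd a) N (inv_series_list N (remove1 a ps) f))"
      using Cons by (simp add: inv_series_list_Cons)
    also have "\<dots> = inv_series (fst a) (snd a) N (inv_series (fst b) (snd b) N (inv_series_list N (remove1 a ps) f))"
      by (rule inv_series_commute)
    finally show ?thesis using False by (simp add: inv_series_list_Cons)
  qed (simp add: inv_series_list_Cons)
qed simp

lemma inv_series_list_mset:
  "mset ps = mset ps' \<Longrightarrow> inv_series_list N ps f = inv_series_list N ps' f"
proof (induction ps arbitrary: ps' f)
  case (Cons a ps)
  have a: "a \<in> set ps'" using Cons.prems by (metis list.set_intros(1) set_mset_mset)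
  have "mset ps' = add_mset a (mset ps)" using Cons.prems by simp
  then have "mset ps = mset (remove1 a ps')" by simp
  then have "inv_series_list N ps f = inv_series_list N (remove1 a ps') f" by (rule Cons.IH)
  then show ?case using inv_series_list_remove1[OF a] by (simp add: inv_series_list_Cons)
qed simp

lemma degrees_below_inv_series_list:
  "degrees_below N' f \<Longrightarrow> degrees_below N' (inv_series_list N ps f)"
  by (rule shift_invariant_degrees_below[OF shift_invariant_inv_series_list])

lemma foldr_inv_op_eq_inv_series_list:
  assumes "degrees_below N f"
  shows "foldr (\<lambda>(p, q) g. inv_op p q \<circ> g) ps id f = inv_series_list N ps f"
proof (induction ps)
  case (Cons a ps)
  obtain p q where a: "a = (p, q)" by (cases a)
  have "degree_below p N (inv_series_list N ps f)"
    using degrees_below_inv_series_list[OF assms] by (simp add: degrees_below_def)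
  then show ?case using Cons a by (simp add: inv_series_list_Cons inv_op_eq_inv_series)
qed simp

lemma id_plus_ED_inv_series_list:
  assumes "degrees_below N f" "(p, q) \<in> set ps"
  shows "id_plus_ED p q (inv_series_list N ps f) = inv_series_list N (remove1 (p, q) ps) f"
proof -
  have "degree_below p N (inv_series_list N (remove1 (p, q) ps) f)"
    using degrees_below_inv_series_list[OF assms(1)] by (simp add: degrees_below_def)
  then show ?thesis
    using inv_series_list_remove1[OF assms(2)] id_plus_ED_inv_series by simp
qed

definition index_pairs :: "nat \<Rightarrow> (nat \<times> nat) list" where
  "index_pairs n = [(p, q). q \<leftarrow> [1..<n+1], p \<leftarrow> [1..<q]]"

lemma all_inv_ops_eq_inv_series_list:
  "degrees_below N f \<Longrightarrow> all_inv_ops n f = inv_series_list N (index_pairs n) f"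
  unfolding all_inv_ops_def index_pairs_def by (rule foldr_inv_op_eq_inv_series_list)

lemma set_index_pairs: "set (index_pairs n) = {(p, q). 1 \<le> p \<and> p < q \<and> q \<le> n}"
proof
  show "set (index_pairs n) \<subseteq> {(p, q). 1 \<le> p \<and> p < q \<and> q \<le> n}"
    unfolding index_pairs_def by auto
  show "{(p, q). 1 \<le> p \<and> p < q \<and> q \<le> n} \<subseteq> set (index_pairs n)"
  proof (clarify)
    fix p q assume "1 \<le> p" "p < q" "q \<le> n"
    then show "(p, q) \<in> set (index_pairs n)" unfolding index_pairs_def by (auto intro!: bexI[of _ q])
  qed
qed

lemma distinct_index_pairs: "distinct (index_pairs n)"
proof (induction n)
  case (Suc n)
  have "index_pairs (Suc n) = index_pairs n @ map (\<lambda>p. (p, Suc n)) [1..<Suc n]"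
    unfolding index_pairs_def by simp
  moreover have "set (index_pairs n) \<inter> set (map (\<lambda>p. (p, Suc n)) [1..<Suc n]) = {}"
    unfolding set_index_pairs by auto
  ultimately show ?case using Suc.IH by (simp add: distinct_map inj_on_def)
qed (simp add: index_pairs_def)

section \<open>Renaming variables and functions independent of some variables\<close>

definition rename_vars :: "(nat \<Rightarrow> nat) \<Rightarrow> cfun \<Rightarrow> cfun" where
  "rename_vars \<rho> f = (\<lambda>x. f (x \<circ> \<rho>))"

lemma fun_upd_comp_inj: "inj \<rho> \<Longrightarrow> (x(\<rho> r := v)) \<circ> \<rho> = (x \<circ> \<rho>)(r := v)"
  by (auto simp: fun_eq_iff inj_eq)

lemma shiftE_rename_vars:
  "inj \<rho> \<Longrightarrow> shiftE (\<rho> r) (rename_vars \<rho> f) = rename_vars \<rho> (shiftE r f)"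
  by (simp add: shiftE_def rename_vars_def fun_upd_comp_inj)

lemma fun_upd_comp_outside: "r \<notin> range \<rho> \<Longrightarrow> (x(r := v)) \<circ> \<rho> = x \<circ> \<rho>"
  by (auto simp: fun_eq_iff)

lemma shiftE_rename_vars_outside: "r \<notin> range \<rho> \<Longrightarrow> shiftE r (rename_vars \<rho> f) = rename_vars \<rho> f"
  by (simp add: shiftE_def rename_vars_def fun_upd_comp_outside)

lemma diffD_rename_vars:
  "inj \<rho> \<Longrightarrow> diffD (\<rho> r) (rename_vars \<rho> f) = rename_vars \<rho> (diffD r f)"
  by (simp add: diffD_def shiftE_rename_vars) (simp add: rename_vars_def)

lemma inv_series_rename_vars:
  assumes "inj \<rho>"
  shows "inv_series (\<rho> p) (\<rho> q) N (rename_vars \<rho> f) = rename_vars \<rho> (inv_series p q N f)"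
proof -
  have "(shiftE (\<rho> r) ^^ l) (rename_vars \<rho> f) = rename_vars \<rho> ((shiftE r ^^ l) f)"
    and "(diffD (\<rho> r) ^^ l) (rename_vars \<rho> f) = rename_vars \<rho> ((diffD r ^^ l) f)" for r l f
    by (induction l) (simp_all add: shiftE_rename_vars diffD_rename_vars assms)
  then show ?thesis by (simp add: inv_series_def) (simp add: rename_vars_def)
qed

lemma inv_series_list_rename_vars:
  "inj \<rho> \<Longrightarrow> inv_series_list N (map (\<lambda>(p, q). (\<rho> p, \<rho> q)) ps) (rename_vars \<rho> f) =
     rename_vars \<rho> (inv_series_list N ps f)"
proof (induction ps)
  case (Cons a ps)
  then show ?case by (cases a) (simp add: inv_series_list_Cons inv_series_rename_vars)
qed simp

lemma degrees_below_rename_vars: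
  assumes "inj \<rho>" "degrees_below N g" "N \<ge> 1"
  shows "degrees_below N (rename_vars \<rho> g)"
  unfolding degrees_below_def
proof
  fix p
  show "degree_below p N (rename_vars \<rho> g)"
  proof (cases "p \<in> range \<rho>")
    case True
    then obtain r where p: "p = \<rho> r" by auto
    have "(diffD (\<rho> r) ^^ l) (rename_vars \<rho> g) = rename_vars \<rho> ((diffD r ^^ l) g)" for l
      by (induction l) (simp_all add: diffD_rename_vars assms(1))
    then show ?thesis
      using assms(2) by (simp add: p degrees_below_def degree_below_def rename_vars_def)
  next
    case False
    then have "diffD p (rename_vars \<rho> g) = (\<lambda>x. 0)"
      by (simp add: diffD_def shiftE_rename_vars_outside)
    then have "degree_below p 1 (rename_vars \<rho> g)" by (simp add: degree_below_def)
    then show ?thesis using degree_below_mono assms(3) by blast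
  qed
qed

lemma inv_series_const_var:
  assumes "N \<ge> 1" "shiftE s g = g"
  shows "inv_series s q N g = g"
proof
  fix x
  have z: "(diffD s ^^ l) g = (\<lambda>x. 0)" if "l \<ge> 1" for l
  proof -
    obtain l' where "l = Suc l'" using \<open>l \<ge> 1\<close> by (cases l) auto
    then have "(diffD s ^^ l) g = (diffD s ^^ l') (diffD s g)" by (simp add: funpow_swap1)
    also have "diffD s g = (\<lambda>x. 0)" using assms(2) by (simp add: diffD_def)
    finally show ?thesis by (simp add: linear_op_funpow_zero[OF linear_op_diffD])
  qed
  have "inv_series s q N g x = (\<Sum>l\<in>{0}. (-1)^l * (shiftE q ^^ l) ((diffD s ^^ l) g) x)"
    unfolding inv_series_def
  proof (rule sum.mono_neutral_right)
    show "\<forall>i\<in>{..<N} - {0}. (-1)^i * (shiftE q ^^ i) ((diffD s ^^ i) g) x = 0"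
      using z linear_op_funpow_zero[OF linear_op_shiftE] by auto
  qed (use assms in auto)
  then show "inv_series s q N g x = g x" by simp
qed

lemma inv_series_list_const_var:
  assumes "N \<ge> 1" "shiftE s h = h" "\<forall>a\<in>set ps. fst a = s"
  shows "inv_series_list N ps h = h"
  using assms(3) by (induction ps) (auto simp: inv_series_list_Cons inv_series_const_var[OF assms(1,2)])

lemma shiftE_inv_series_const_var:
  assumes "degree_below p N h" "shiftE s h = h"
  shows "shiftE p (inv_series p s N h) = h"
proof -
  have s: "shiftE s (inv_series p s N h) = inv_series p s N h"
    using shift_invariant_inv_series_commute[OF shift_invariant_shiftE, of s p s N h] assms(2) by simp
  have "shiftE s (diffD p (inv_series p s N h)) = diffD p (inv_series p s N h)"
    using shift_invariant_diffD_commute[OF shift_invariant_shiftE, of s p] s by simp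
  then have "shiftE p (inv_series p s N h) = id_plus_ED p s (inv_series p s N h)"
    by (simp add: id_plus_ED_def diffD_def)
  also have "\<dots> = h" by (rule id_plus_ED_inv_series[OF assms(1)])
  finally show ?thesis .
qed

definition shift_vars :: "nat list \<Rightarrow> cfun \<Rightarrow> cfun" where
  "shift_vars ps = foldr (\<lambda>p g. shiftE p \<circ> g) ps id"

lemma shift_vars_Nil [simp]: "shift_vars [] f = f"
  by (simp add: shift_vars_def)

lemma shift_vars_Cons: "shift_vars (p # ps) f = shiftE p (shift_vars ps f)"
  by (simp add: shift_vars_def)

lemma shift_vars_apply:
  "distinct ps \<Longrightarrow> shift_vars ps f x = f (\<lambda>i. x i + (if i \<in> set ps then 1 else 0))"
proof (induction ps arbitrary: f x)
  case (Cons a ps)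
  have "shift_vars (a # ps) f x = f (\<lambda>i. (x(a := x a + 1)) i + (if i \<in> set ps then 1 else 0))"
    using Cons by (simp add: shift_vars_Cons shiftE_def)
  also have "(\<lambda>i. (x(a := x a + 1)) i + (if i \<in> set ps then 1 else 0)) =
      (\<lambda>i. x i + (if i \<in> set (a # ps) then 1 else 0))"
    using Cons.prems by (auto simp: fun_eq_iff)
  finally show ?case .
qed simp

lemma shift_invariant_shift_vars_commute:
  "shift_invariant L \<Longrightarrow> L (shift_vars ps f) = shift_vars ps (L f)"
  by (induction ps arbitrary: f) (auto simp: shift_vars_Cons shift_invariant_def)

lemma shift_vars_inv_series_list_const_var:
  assumes "s \<notin> set ps" "shiftE s h = h" "degrees_below N h"
  shows "shift_vars ps (inv_series_list N (map (\<lambda>p. (p, s)) ps) h) = h"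
  using assms(1)
proof (induction ps)
  case (Cons p ps)
  have "shift_vars (p # ps) (inv_series_list N (map (\<lambda>p. (p, s)) (p # ps)) h) =
        shiftE p (inv_series p s N (shift_vars ps (inv_series_list N (map (\<lambda>p. (p, s)) ps) h)))"
    by (simp add: shift_vars_Cons inv_series_list_Cons
        shift_invariant_shift_vars_commute[OF shift_invariant_inv_series])
  also have "\<dots> = h"
    using Cons assms(2,3) shiftE_inv_series_const_var by (simp add: degrees_below_def)
  finally show ?case .
qed simp

definition depends_on_first :: "nat \<Rightarrow> cfun \<Rightarrow> bool" where
  "depends_on_first m G \<longleftrightarrow> (\<forall>x y. (\<forall>i\<in>{1..m}. x i = y i) \<longrightarrow> G x = G y)"

lemma depends_on_firstD:
  "depends_on_first m G \<Longrightarrow> (\<And>i. 1 \<le> i \<Longrightarrow> i \<le> m \<Longrightarrow> x i = y i) \<Longrightarrow> G x = G y"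
  unfolding depends_on_first_def by auto

lemma depends_on_first_shiftE: "depends_on_first m G \<Longrightarrow> depends_on_first m (shiftE r G)"
  unfolding depends_on_first_def shiftE_def
proof (intro allI impI)
  fix x y :: "nat \<Rightarrow> complex"
  assume G: "\<forall>x y. (\<forall>i\<in>{1..m}. x i = y i) \<longrightarrow> G x = G y" and "\<forall>i\<in>{1..m}. x i = y i"
  then have "\<forall>i\<in>{1..m}. (x(r := x r + 1)) i = (y(r := y r + 1)) i" by auto
  then show "G (x(r := x r + 1)) = G (y(r := y r + 1))" using G by blast
qed

lemma depends_on_first_diffD:
  assumes "depends_on_first m G"
  shows "depends_on_first m (diffD r G)"
  unfolding depends_on_first_def
proof (intro allI impI)
  fix x y :: "nat \<Rightarrow> complex"
  assume "\<forall>i\<in>{1..m}. x i = y i"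
  then have "shiftE r G x = shiftE r G y" "G x = G y"
    using assms depends_on_first_shiftE[OF assms] unfolding depends_on_first_def by blast+
  then show "diffD r G x = diffD r G y" by (simp add: diffD_def)
qed

lemma funpow_preserves: "(\<And>x. P x \<Longrightarrow> P (f x)) \<Longrightarrow> P x \<Longrightarrow> P ((f ^^ n) x)"
  by (induction n) auto

lemma depends_on_first_inv_series:
  assumes "depends_on_first m G"
  shows "depends_on_first m (inv_series p q N G)"
proof -
  have "\<forall>l. depends_on_first m ((shiftE q ^^ l) ((diffD p ^^ l) G))"
    using assms
    by (intro allI funpow_preserves[where P = "depends_on_first m"] depends_on_first_shiftE depends_on_first_diffD)
  then show ?thesis
    unfolding depends_on_first_def
  proof (intro allI impI)
    fix x y :: "nat \<Rightarrow> complex"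
    assume "\<forall>l. \<forall>x y. (\<forall>i\<in>{1..m}. x i = y i) \<longrightarrow>
        (shiftE q ^^ l) ((diffD p ^^ l) G) x = (shiftE q ^^ l) ((diffD p ^^ l) G) y"
      and "\<forall>i\<in>{1..m}. x i = y i"
    then have "(shiftE q ^^ l) ((diffD p ^^ l) G) x = (shiftE q ^^ l) ((diffD p ^^ l) G) y" for l
      by blast
    then show "inv_series p q N G x = inv_series p q N G y"
      unfolding inv_series_def by simp
  qed
qed

lemma depends_on_first_inv_series_list:
  "depends_on_first m G \<Longrightarrow> depends_on_first m (inv_series_list N ps G)"
  by (induction ps) (auto simp: inv_series_list_Cons depends_on_first_inv_series)

lemma degree_below_0_iff: "degree_below p 0 f \<longleftrightarrow> f = (\<lambda>x. 0)"
  by (simp add: degree_below_def)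

lemma degree_below_add:
  "degree_below p N f \<Longrightarrow> degree_below p N g \<Longrightarrow> degree_below p N (\<lambda>x. f x + g x)"
  unfolding degree_below_def by (simp add: linear_op_add[OF linear_op_funpow[OF linear_op_diffD]])

lemma degree_below_cmult: "degree_below p N f \<Longrightarrow> degree_below p N (\<lambda>x. c * f x)"
  unfolding degree_below_def by (simp add: linear_op_cmult[OF linear_op_funpow[OF linear_op_diffD]])

lemma degree_below_zero: "degree_below p N (\<lambda>x. 0)"
  unfolding degree_below_def by (rule linear_op_funpow_zero[OF linear_op_diffD])

lemma degree_below_sum:
  "(\<And>s. s \<in> S \<Longrightarrow> degree_below p N (f s)) \<Longrightarrow> degree_below p N (\<lambda>x. \<Sum>s\<in>S. f s x)"
  unfolding degree_below_def by (simp add: linear_op_sum[OF linear_op_funpow[OF linear_op_diffD]])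

lemma degree_below_Suc_iff: "degree_below p (Suc N) f \<longleftrightarrow> degree_below p N (diffD p f)"
  unfolding degree_below_def by (simp add: funpow_swap1)

lemma degree_below_Suc_if_diffD_zero: "diffD p f = (\<lambda>x. 0) \<Longrightarrow> degree_below p (Suc N) f"
  by (simp add: degree_below_Suc_iff degree_below_zero)

lemma diffD_mult:
  "diffD p (\<lambda>x. f x * g x) = (\<lambda>x. diffD p f x * shiftE p g x + f x * diffD p g x)"
  by (rule ext) (simp add: diffD_def shiftE_def algebra_simps)

lemma degree_below_mult:
  "degree_below p a f \<Longrightarrow> degree_below p b g \<Longrightarrow> degree_below p (a + b) (\<lambda>x. f x * g x)"
proof (induction "a + b" arbitrary: a b f g rule: less_induct)
  case less
  show ?case
  proof (cases "a = 0 \<or> b = 0")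
    case True
    then have "(\<lambda>x. f x * g x) = (\<lambda>x. 0)" using less.prems by (auto simp: degree_below_0_iff)
    then show ?thesis using degree_below_zero by simp
  next
    case False
    then obtain a' b' where ab: "a = Suc a'" "b = Suc b'" by (cases a; cases b) auto
    have f': "degree_below p a' (diffD p f)" and g': "degree_below p b' (diffD p g)"
      using less.prems ab by (simp_all add: degree_below_Suc_iff)
    have "degree_below p b (shiftE p g)"
      by (rule shift_invariant_degree_below[OF shift_invariant_shiftE less.prems(2)])
    then have "degree_below p (a' + b) (\<lambda>x. diffD p f x * shiftE p g x)"
      using ab by (intro less.hyps f') simp_all
    moreover have "degree_below p (a' + b) (\<lambda>x. f x * diffD p g x)"
      using ab less.hyps[OF _ less.prems(1) g'] by simp
    ultimately have "degree_below p (a' + b) (diffD p (\<lambda>x. f x * g x))"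
      unfolding diffD_mult by (rule degree_below_add)
    then show ?thesis using ab by (simp add: degree_below_Suc_iff)
  qed
qed

lemma degree_below_prod:
  assumes "finite S" "\<And>s. s \<in> S \<Longrightarrow> degree_below p N (f s)"
  shows "degree_below p (N * card S + 1) (\<lambda>x. \<Prod>s\<in>S. f s x)"
  using assms
proof (induction S rule: finite_induct)
  case empty
  have "diffD p (\<lambda>x. 1) = (\<lambda>x. 0)" by (simp add: diffD_def shiftE_def)
  then show ?case using degree_below_Suc_if_diffD_zero by simp
next
  case (insert s S)
  have "degree_below p (N + (N * card S + 1)) (\<lambda>x. f s x * (\<Prod>s\<in>S. f s x))"
    using insert by (intro degree_below_mult) auto
  then show ?case using insert.hyps by (simp add: algebra_simps)
qed

lemma degree_below_gchoose: "degree_below p (Suc k) (\<lambda>x. (x q + c) gchoose k)"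
proof (induction k)
  case 0
  have "diffD p (\<lambda>x. (x q + c) gchoose 0) = (\<lambda>x. 0)" by (simp add: diffD_def shiftE_def)
  then show ?case using degree_below_Suc_if_diffD_zero by simp
next
  case (Suc k)
  show ?case
  proof (cases "q = p")
    case True
    have "diffD p (\<lambda>x. (x q + c) gchoose Suc k) = (\<lambda>x. (x q + c) gchoose k)"
    proof
      fix x
      have "(x q + 1 + c) gchoose Suc k = ((x q + c) + 1) gchoose Suc k" by (simp add: algebra_simps)
      then show "diffD p (\<lambda>x. (x q + c) gchoose Suc k) x = (x q + c) gchoose k"
        using True by (simp add: diffD_def shiftE_def gbinomial_Suc_Suc)
    qed
    then show ?thesis using Suc by (simp add: degree_below_Suc_iff)
  next
    case False
    then have "diffD p (\<lambda>x. (x q + c) gchoose Suc k) = (\<lambda>x. 0)" by (simp add: diffD_def shiftE_def)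
    then show ?thesis using degree_below_Suc_if_diffD_zero by simp
  qed
qed

section \<open>Binomial determinants\<close>

lemma vdm_poly_shift: "vdm_poly m (\<lambda>j. x j + c) = vdm_poly m x"
  by (simp add: vdm_poly_def)

lemma vdm_poly_lessThan:
  "vdm_poly m x = (\<Prod>j<m. \<Prod>i<j. (x (Suc j) - x (Suc i)) / (of_nat j - of_nat i))"
proof -
  have "vdm_poly m x = (\<Prod>j\<in>{Suc 0..m}. \<Prod>i\<in>{Suc 0..<j}. (x j - x i) / (of_nat j - of_nat i))"
    by (simp add: vdm_poly_def)
  also have "\<dots> = (\<Prod>j<m. \<Prod>i\<in>{Suc 0..<Suc j}. (x (Suc j) - x i) / (of_nat (Suc j) - of_nat i))"
    by (rule prod.atLeast1_atMost_eq)
  also have "\<dots> = (\<Prod>j<m. \<Prod>i<j. (x (Suc j) - x (Suc i)) / (of_nat (Suc j) - of_nat (Suc i)))"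
    by (simp only: atLeastLessThanSuc_atLeastAtMost prod.atLeast1_atMost_eq)
  finally show ?thesis by simp
qed

lemma vdm_poly_Suc:
  "vdm_poly (Suc m) x =
     (\<Prod>i<m. (x (Suc (Suc i)) - x 1) / of_nat (Suc i)) * vdm_poly m (\<lambda>j. x (Suc j))"
proof -
  define g where "g i j = (x (Suc j) - x (Suc i)) / (of_nat j - of_nat i :: complex)" for i j
  have "vdm_poly (Suc m) x = (\<Prod>j<Suc m. \<Prod>i<j. g i j)" unfolding vdm_poly_lessThan g_def ..
  also have "\<dots> = (\<Prod>j<m. g 0 (Suc j) * (\<Prod>i<j. g (Suc i) (Suc j)))"
    by (simp only: prod.lessThan_Suc_shift) simp
  also have "\<dots> = (\<Prod>j<m. g 0 (Suc j)) * (\<Prod>j<m. \<Prod>i<j. g (Suc i) (Suc j))"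
    by (rule prod.distrib)
  finally show ?thesis unfolding vdm_poly_lessThan g_def by simp
qed

lemma det_mat_Leibniz:
  "det (mat n n F) = (\<Sum>p | p permutes {0..<n}. of_int (sign p) * (\<Prod>i<n. F (i, p i)))"
proof -
  have "det (mat n n F) =
      (\<Sum>p | p permutes {0..<n}. of_int (sign p) * (\<Prod>i=0..<n. mat n n F $$ (i, p i)))"
    by (rule det_def') simp
  also have "\<dots> = (\<Sum>p | p permutes {0..<n}. of_int (sign p) * (\<Prod>i<n. F (i, p i)))"
  proof (rule sum.cong[OF refl])
    fix p assume "p \<in> {p. p permutes {0..<n}}"
    then have "p i < n" if "i < n" for i using permutes_in_image that by fastforce
    then show "of_int (sign p) * (\<Prod>i=0..<n. mat n n F $$ (i, p i)) =
        of_int (sign p) * (\<Prod>i<n. F (i, p i))"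
      by (simp add: lessThan_atLeast0)
  qed
  finally show ?thesis .
qed

lemma det_mat_scale_rows_cols:
  "det (mat n n (\<lambda>(i, j). r i * c j * E (i, j))) = (\<Prod>i<n. r i) * (\<Prod>j<n. c j) * det (mat n n E)"
proof -
  have "(\<Prod>i<n. r i * c (p i) * E (i, p i)) = (\<Prod>i<n. r i) * (\<Prod>j<n. c j) * (\<Prod>i<n. E (i, p i))"
    if "p permutes {0..<n}" for p
    using prod.permute[OF that, of c] by (simp add: prod.distrib comp_def lessThan_atLeast0)
  then show ?thesis unfolding det_mat_Leibniz by (simp add: sum_distrib_left algebra_simps)
qed

definition binom_mat :: "nat \<Rightarrow> complex \<Rightarrow> (nat \<Rightarrow> nat) \<Rightarrow> (nat \<Rightarrow> complex) \<Rightarrow> complex mat" where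
  "binom_mat m c e x = mat m m (\<lambda>(i, j). (x (Suc i) + c) gchoose (e j))"

lemma binom_mat_carrier [simp]: "binom_mat m c e x \<in> carrier_mat m m"
  by (simp add: binom_mat_def)

lemma det_binom_mat:
  "det (binom_mat m c e x) =
     (\<Sum>p | p permutes {0..<m}. of_int (sign p) * (\<Prod>i<m. (x (Suc i) + c) gchoose (e (p i))))"
  unfolding binom_mat_def det_mat_Leibniz by simp

lemma degrees_below_det_binom_mat:
  assumes "\<And>j. j < m \<Longrightarrow> e j \<le> K"
  shows "degrees_below (Suc K * m + 1) (\<lambda>x. det (binom_mat m c e x))"
  unfolding degrees_below_def det_binom_mat
proof (intro allI degree_below_sum degree_below_cmult)
  fix p \<pi> assume "\<pi> \<in> {p. p permutes {0..<m}}"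
  then have "\<pi> i < m" if "i < m" for i using permutes_in_image that by fastforce
  then have "degree_below p (Suc K) (\<lambda>x. (x (Suc i) + c) gchoose (e (\<pi> i)))" if "i \<in> {..<m}" for i
    using that assms degree_below_mono[OF degree_below_gchoose] by simp
  from degree_below_prod[of "{..<m}", OF _ this]
  show "degree_below p (Suc K * m + 1) (\<lambda>x. \<Prod>i<m. (x (Suc i) + c) gchoose e (\<pi> i))" by simp
qed

lemma gbinomial_Suc_eq:
  fixes y a :: complex
  shows "(y gchoose Suc j) + (y gchoose j) * (- (a - of_nat j) / of_nat (Suc j)) =
         (y gchoose j) * (y - a) / of_nat (Suc j)"
proof -
  have "y * (y gchoose j) = of_nat j * (y gchoose j) + of_nat (Suc j) * (y gchoose Suc j)"
    by (rule gbinomial_mult_1)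
  then have "(y gchoose Suc j) = (y - of_nat j) * (y gchoose j) / of_nat (Suc j)"
    by (simp add: field_simps del: of_nat_Suc)
  then show ?thesis by (simp add: field_simps del: of_nat_Suc)
qed

text \<open>Right multiplication by this matrix adds (j - a)/(j + 1) times column j to column j + 1,
  which turns the column (y gchoose (j + 1)) into (y gchoose j) (y - a) / (j + 1).\<close>
definition binom_col_op :: "nat \<Rightarrow> complex \<Rightarrow> complex mat" where
  "binom_col_op n a = mat n n (\<lambda>(i, j). if i = j then 1 else
      if j = Suc i then - (a - of_nat i) / of_nat (Suc i) else 0)"

lemma binom_col_op_carrier [simp]: "binom_col_op n a \<in> carrier_mat n n"
  by (simp add: binom_col_op_def)

lemma det_binom_col_op: "det (binom_col_op n a) = 1"
proof -
  have "upper_triangular (binom_col_op n a)" unfolding upper_triangular_def binom_col_op_def by auto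
  then have "det (binom_col_op n a) = prod_list (diag_mat (binom_col_op n a))"
    by (intro det_upper_triangular[of _ n]) simp_all
  also have "\<dots> = 1" unfolding prod_list_diag_prod by (simp add: binom_col_op_def)
  finally show ?thesis .
qed

lemma binom_mat_times_col_op:
  assumes ij: "i < n" "j < n"
  shows "(binom_mat n 0 (\<lambda>j. j) x * binom_col_op n a) $$ (i, j) =
    (if j = 0 then 1 else (x (Suc i) gchoose (j - 1)) * (x (Suc i) - a) / of_nat j)"
proof -
  define y where "y = x (Suc i)"
  define s where "s k = (if k = j then y gchoose k else 0)" for k
  define t where "t k = (if Suc k = j then (y gchoose k) * (- (a - of_nat k) / of_nat (Suc k)) else 0)" for k
  have "(binom_mat n 0 (\<lambda>j. j) x * binom_col_op n a) $$ (i, j) =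
      (\<Sum>k\<in>{0..<n}. binom_mat n 0 (\<lambda>j. j) x $$ (i, k) * binom_col_op n a $$ (k, j))"
    using ij by (simp add: binom_mat_def binom_col_op_def scalar_prod_def)
  also have "\<dots> = (\<Sum>k\<in>{0..<n}. s k + t k)"
    using ij by (intro sum.cong) (auto simp: binom_mat_def binom_col_op_def y_def s_def t_def)
  also have "\<dots> = (\<Sum>k\<in>{0..<n}. s k) + (\<Sum>k\<in>{0..<n}. t k)"
    by (rule sum.distrib)
  also have "(\<Sum>k\<in>{0..<n}. s k) = y gchoose j"
    using ij by (simp add: s_def)
  also have "(\<Sum>k\<in>{0..<n}. t k) = (if j = 0 then 0 else (y gchoose (j - 1)) * (- (a - of_nat (j - 1)) / of_nat j))"
    using ij by (cases j) (simp_all add: t_def)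
  also have "(y gchoose j) + \<dots> = (if j = 0 then 1 else (y gchoose (j - 1)) * (y - a) / of_nat j)"
    using gbinomial_Suc_eq[of y "j - 1" a] by (cases j) simp_all
  finally show ?thesis unfolding y_def .
qed

lemma det_binom_mat_Suc:
  "det (binom_mat (Suc m) 0 (\<lambda>j. j) x) =
     (\<Prod>i<m. (x (Suc (Suc i)) - x 1) / of_nat (Suc i)) * det (binom_mat m 0 (\<lambda>j. j) (\<lambda>j. x (Suc j)))"
proof -
  define B where "B = binom_mat (Suc m) 0 (\<lambda>j. j) x * binom_col_op (Suc m) (x 1)"
  have Bc: "B \<in> carrier_mat (Suc m) (Suc m)"
    unfolding B_def by (rule mult_carrier_mat[OF binom_mat_carrier binom_col_op_carrier])
  note B = binom_mat_times_col_op[where n = "Suc m" and x = x and a = "x 1", folded B_def]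
  have B00: "B $$ (0, 0) = 1" and B0: "\<And>j. j < m \<Longrightarrow> B $$ (0, Suc j) = 0"
    by (simp_all add: B)
  have "det (binom_mat (Suc m) 0 (\<lambda>j. j) x) = det B"
    using det_mult[OF binom_mat_carrier binom_col_op_carrier] by (simp add: B_def det_binom_col_op)
  also have "\<dots> = (\<Sum>j<Suc m. B $$ (0, j) * cofactor B 0 j)"
    by (rule laplace_expansion_row[OF Bc]) simp
  also have "\<dots> = B $$ (0, 0) * cofactor B 0 0 + (\<Sum>j<m. B $$ (0, Suc j) * cofactor B 0 (Suc j))"
    by (rule sum.lessThan_Suc_shift)
  also have "\<dots> = det (mat_delete B 0 0)"
    by (simp add: B00 B0 cofactor_def)
  also have "mat_delete B 0 0 = mat m m (\<lambda>(i, j). (x (Suc (Suc i)) - x 1) * (1 / of_nat (Suc j)) *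
      (x (Suc (Suc i)) gchoose j))"
    using Bc by (intro eq_matI) (auto simp: mat_delete_def B simp del: of_nat_Suc)
  also have "det \<dots> = (\<Prod>i<m. x (Suc (Suc i)) - x 1) * (\<Prod>j<m. 1 / of_nat (Suc j)) *
      det (mat m m (\<lambda>(i, j). x (Suc (Suc i)) gchoose j))"
    using det_mat_scale_rows_cols[of m "\<lambda>i. x (Suc (Suc i)) - x 1" "\<lambda>j. 1 / of_nat (Suc j)"
        "\<lambda>(i, j). x (Suc (Suc i)) gchoose j"]
    by simp
  also have "mat m m (\<lambda>(i, j). x (Suc (Suc i)) gchoose j) = binom_mat m 0 (\<lambda>j. j) (\<lambda>j. x (Suc j))"
    by (simp add: binom_mat_def)
  finally show ?thesis by (simp add: prod_dividef del: of_nat_Suc)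
qed

lemma det_binom_mat_eq_vdm_poly: "det (binom_mat m 0 (\<lambda>j. j) x) = vdm_poly m x"
proof (induction m arbitrary: x)
  case 0
  have "det (binom_mat 0 0 (\<lambda>j. j) x) = 1" by (rule det_dim_zero) simp
  then show ?case by (simp add: vdm_poly_def)
next
  case (Suc m)
  then show ?case by (simp only: det_binom_mat_Suc vdm_poly_Suc)
qed

definition skip :: "nat \<Rightarrow> nat \<Rightarrow> nat" where
  "skip s j = (if j < s then j else Suc j)"

lemma inj_skip: "inj (skip s)"
  unfolding inj_def skip_def by auto

text \<open>The Vandermonde product is the determinant of ((x_(i+1) + 1) gchoose j), whose first column
  consists of ones.\<close>
lemma vdm_poly_Laplace:
  "vdm_poly (Suc m) x = (\<Sum>i<Suc m. (-1)^i * det (binom_mat m 1 Suc (x \<circ> skip (Suc i))))"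
proof -
  define A where "A = binom_mat (Suc m) 1 (\<lambda>j. j) x"
  have "vdm_poly (Suc m) x = vdm_poly (Suc m) (\<lambda>j. x j + 1)" by (simp add: vdm_poly_shift)
  also have "\<dots> = det A"
    unfolding A_def det_binom_mat_eq_vdm_poly[symmetric] by (simp add: binom_mat_def add.assoc)
  also have "\<dots> = (\<Sum>i<Suc m. A $$ (i, 0) * cofactor A i 0)"
    by (rule laplace_expansion_column) (auto simp: A_def)
  also have "\<dots> = (\<Sum>i<Suc m. (-1)^i * det (binom_mat m 1 Suc (x \<circ> skip (Suc i))))"
  proof (rule sum.cong[OF refl])
    fix i assume "i \<in> {..<Suc m}"
    then have "A $$ (i, 0) = 1" by (simp add: A_def binom_mat_def)
    moreover have "mat_delete A i 0 = binom_mat m 1 Suc (x \<circ> skip (Suc i))"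
      by (rule eq_matI) (auto simp: A_def binom_mat_def mat_delete_def skip_def)
    ultimately show "A $$ (i, 0) * cofactor A i 0 = (-1)^i * det (binom_mat m 1 Suc (x \<circ> skip (Suc i)))"
      by (simp add: cofactor_def)
  qed
  finally show ?thesis .
qed

fun diff_first :: "nat \<Rightarrow> cfun \<Rightarrow> cfun" where
  "diff_first 0 G = G"
| "diff_first (Suc m) G = diff_first m (diffD (Suc m) G)"

lemma shift_invariant_diff_first: "shift_invariant (diff_first m)"
proof (induction m)
  case 0
  have "diff_first 0 = (\<lambda>G. G)" by (rule ext) simp
  then show ?case using shift_invariant_id by simp
next
  case (Suc m)
  have "diff_first (Suc m) = (\<lambda>G. diff_first m (diffD (Suc m) G))" by (rule ext) simp
  then show ?case using shift_invariant_comp[OF Suc.IH shift_invariant_diffD] by simp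
qed

lemma diff_first_prod:
  assumes "\<And>x j v. 1 \<le> j \<Longrightarrow> j \<le> m \<Longrightarrow> h (x(j := v)) = h x"
  shows "diff_first m (\<lambda>x. h x * (\<Prod>i<m. g i (x (Suc i)))) =
    (\<lambda>x. h x * (\<Prod>i<m. g i (x (Suc i) + 1) - g i (x (Suc i))))"
  using assms
proof (induction m arbitrary: h)
  case (Suc m)
  define h' where "h' x = h x * (g m (x (Suc m) + 1) - g m (x (Suc m)))" for x
  have d: "diffD (Suc m) (\<lambda>x. h x * (\<Prod>i<Suc m. g i (x (Suc i)))) =
      (\<lambda>x. h' x * (\<Prod>i<m. g i (x (Suc i))))"
  proof
    fix x
    have "h (x(Suc m := x (Suc m) + 1)) = h x" by (rule Suc.prems) auto
    then show "diffD (Suc m) (\<lambda>x. h x * (\<Prod>i<Suc m. g i (x (Suc i)))) x = h' x * (\<Prod>i<m. g i (x (Suc i)))"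
      by (simp add: diffD_def shiftE_def h'_def algebra_simps)
  qed
  have h': "h' (x(j := v)) = h' x" if "1 \<le> j" "j \<le> m" for x j v
  proof -
    have "h (x(j := v)) = h x" using that by (intro Suc.prems) auto
    moreover have "(x(j := v)) (Suc m) = x (Suc m)" using that by simp
    ultimately show ?thesis by (simp only: h'_def)
  qed
  have "diff_first (Suc m) (\<lambda>x. h x * (\<Prod>i<Suc m. g i (x (Suc i)))) =
      diff_first m (\<lambda>x. h' x * (\<Prod>i<m. g i (x (Suc i))))"
    by (simp only: diff_first.simps d)
  also have "\<dots> = (\<lambda>x. h' x * (\<Prod>i<m. g i (x (Suc i) + 1) - g i (x (Suc i))))"
    by (rule Suc.IH) (rule h')
  finally show ?case by (simp add: h'_def algebra_simps)
qed simp

lemma diff_first_det_binom_mat: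
  "diff_first m (\<lambda>x. det (binom_mat m 0 Suc x)) = (\<lambda>x. det (binom_mat m 0 (\<lambda>j. j) x))"
proof -
  define P where "P = {p. p permutes {0..<m}}"
  define F where "F p = (\<lambda>x :: nat \<Rightarrow> complex. \<Prod>i<m. x (Suc i) gchoose Suc (p i))" for p
  have L: "linear_op (diff_first m)" using shift_invariant_diff_first by (rule shift_invariant_linear_op)
  have "diff_first m (F p) = (\<lambda>x. \<Prod>i<m. x (Suc i) gchoose p i)" for p
    using diff_first_prod[of m "\<lambda>x. 1" "\<lambda>i y. y gchoose Suc (p i)"]
    by (simp add: F_def gbinomial_Suc_Suc)
  moreover have "(\<lambda>x. det (binom_mat m 0 Suc x)) = (\<lambda>x. \<Sum>p\<in>P. of_int (sign p) * F p x)"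
    by (simp add: det_binom_mat P_def F_def)
  ultimately have "diff_first m (\<lambda>x. det (binom_mat m 0 Suc x)) =
      (\<lambda>x. \<Sum>p\<in>P. of_int (sign p) * (\<Prod>i<m. x (Suc i) gchoose p i))"
    by (simp add: linear_op_sum[OF L] linear_op_cmult[OF L])
  then show ?thesis by (simp add: det_binom_mat P_def)
qed

lemma binom_mat_transpose:
  assumes "1 \<le> i" "i < m"
  shows "binom_mat m c e (x \<circ> Transposition.transpose i (Suc i)) = swaprows (i - 1) i (binom_mat m c e x)"
  using assms by (intro eq_matI) (auto simp: binom_mat_def Transposition.transpose_def)

lemma det_binom_mat_transpose:
  assumes "1 \<le> i" "i < m"
  shows "det (binom_mat m c e (x \<circ> Transposition.transpose i (Suc i))) = - det (binom_mat m c e x)"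
  unfolding binom_mat_transpose[OF assms] using assms by (intro det_swaprows) auto

section \<open>The summation lemma\<close>

definition of_int_vec :: "(nat \<Rightarrow> int) \<Rightarrow> nat \<Rightarrow> complex" where
  "of_int_vec l = (\<lambda>j. of_int (l j))"

lemma of_int_vec_fun_upd: "of_int_vec (l(j := v)) = (of_int_vec l)(j := of_int v)"
  by (auto simp: of_int_vec_def)

definition interlacing :: "nat \<Rightarrow> (nat \<Rightarrow> int) \<Rightarrow> (nat \<Rightarrow> int) set" where
  "interlacing m k = {l. (\<forall>j. (j = 0 \<or> m < j) \<longrightarrow> l j = 0) \<and>
      (\<forall>j. 1 \<le> j \<longrightarrow> j \<le> m \<longrightarrow> k j \<le> l j \<and> l j \<le> k (Suc j)) \<and>
      (\<forall>j. 1 \<le> j \<longrightarrow> j < m \<longrightarrow> l j < l (Suc j))}"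

text \<open>Only the last step k_m <= k_(m+1) is allowed to be weak: removing the last entry of a row
  that ends at k_(m+1) leaves a row interlacing k with k_(m+1) lowered by one.\<close>
definition almost_strict :: "nat \<Rightarrow> (nat \<Rightarrow> int) \<Rightarrow> bool" where
  "almost_strict m k \<longleftrightarrow> (\<forall>j. 1 \<le> j \<longrightarrow> j < m \<longrightarrow> k j < k (Suc j)) \<and> (1 \<le> m \<longrightarrow> k m \<le> k (Suc m))"

lemma interlacing_0: "interlacing 0 k = {\<lambda>_. 0}"
proof -
  have "l \<in> interlacing 0 k \<longleftrightarrow> l = (\<lambda>_. 0)" for l
  proof
    assume "l \<in> interlacing 0 k"
    then have "l j = 0" for j unfolding interlacing_def by (cases j) auto
    then show "l = (\<lambda>_. 0)" by auto
  qed (auto simp: interlacing_def)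
  then show ?thesis by auto
qed

lemma interlacing_zero: "l \<in> interlacing m k \<Longrightarrow> m < j \<Longrightarrow> l j = 0"
  unfolding interlacing_def by auto

lemma almost_strict_Suc_D1: "almost_strict (Suc m) k \<Longrightarrow> almost_strict m k"
  unfolding almost_strict_def by (auto simp: less_imp_le)

lemma almost_strict_Suc_D2:
  "almost_strict (Suc m) k \<Longrightarrow> almost_strict m (k(Suc m := k (Suc m) - 1))"
  unfolding almost_strict_def by auto

lemma interlacing_Suc_subset:
  "interlacing (Suc m) k \<subseteq>
    (\<lambda>(l, v). l(Suc m := v)) ` (interlacing m k \<times> {k (Suc m) + 1 .. k (Suc (Suc m))}) \<union>
    (\<lambda>l. l(Suc m := k (Suc m))) ` interlacing m (k(Suc m := k (Suc m) - 1))"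
proof
  fix l assume l: "l \<in> interlacing (Suc m) k"
  define l' where "l' = l(Suc m := 0)"
  have l_eq: "l = l'(Suc m := l (Suc m))" by (simp add: l'_def)
  have z: "\<forall>j. (j = 0 \<or> Suc m < j) \<longrightarrow> l j = 0"
    and b: "\<forall>j. 1 \<le> j \<longrightarrow> j \<le> Suc m \<longrightarrow> k j \<le> l j \<and> l j \<le> k (Suc j)"
    and s: "\<forall>j. 1 \<le> j \<longrightarrow> j < Suc m \<longrightarrow> l j < l (Suc j)"
    using l unfolding interlacing_def by auto
  have z': "\<forall>j. (j = 0 \<or> m < j) \<longrightarrow> l' j = 0"
    using z by (auto simp: l'_def)
  show "l \<in> (\<lambda>(l, v). l(Suc m := v)) ` (interlacing m k \<times> {k (Suc m) + 1 .. k (Suc (Suc m))}) \<union>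
    (\<lambda>l. l(Suc m := k (Suc m))) ` interlacing m (k(Suc m := k (Suc m) - 1))"
  proof (cases "l (Suc m) > k (Suc m)")
    case True
    have "l' \<in> interlacing m k" unfolding interlacing_def using z' b s by (auto simp: l'_def)
    moreover have "l (Suc m) \<in> {k (Suc m) + 1 .. k (Suc (Suc m))}" using True b by auto
    ultimately show ?thesis using l_eq by (intro UnI1) (auto intro!: image_eqI[of _ _ "(l', l (Suc m))"])
  next
    case False
    then have lk: "l (Suc m) = k (Suc m)" using b by force
    have "l' \<in> interlacing m (k(Suc m := k (Suc m) - 1))"
      unfolding interlacing_def
    proof (intro CollectI conjI allI impI)
      fix j assume j: "1 \<le> j" "j \<le> m"
      show "(k(Suc m := k (Suc m) - 1)) j \<le> l' j" using b j by (auto simp: l'_def)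
      show "l' j \<le> (k(Suc m := k (Suc m) - 1)) (Suc j)"
      proof (cases "j = m")
        case True
        then have "l m < l (Suc m)" using s j by auto
        then show ?thesis using True lk j by (auto simp: l'_def)
      qed (use b j in \<open>auto simp: l'_def\<close>)
    qed (use z' s in \<open>auto simp: l'_def\<close>)
    then show ?thesis using l_eq lk by (intro UnI2) auto
  qed
qed

lemma fun_upd_in_interlacing_Suc_above:
  assumes "l \<in> interlacing m k" "v \<in> {k (Suc m) + 1 .. k (Suc (Suc m))}"
  shows "l(Suc m := v) \<in> interlacing (Suc m) k"
proof -
  have z: "\<forall>j. (j = 0 \<or> m < j) \<longrightarrow> l j = 0"
    and b: "\<forall>j. 1 \<le> j \<longrightarrow> j \<le> m \<longrightarrow> k j \<le> l j \<and> l j \<le> k (Suc j)"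
    and s: "\<forall>j. 1 \<le> j \<longrightarrow> j < m \<longrightarrow> l j < l (Suc j)"
    using assms(1) unfolding interlacing_def by auto
  show ?thesis unfolding interlacing_def
  proof (intro CollectI conjI allI impI)
    fix j assume j: "1 \<le> j" "j < Suc m"
    show "(l(Suc m := v)) j < (l(Suc m := v)) (Suc j)"
      using b s assms(2) j by (cases "j = m") fastforce+
  qed (use z b assms(2) in auto)
qed

lemma fun_upd_in_interlacing_Suc_last:
  assumes "almost_strict (Suc m) k" "l \<in> interlacing m (k(Suc m := k (Suc m) - 1))"
  shows "l(Suc m := k (Suc m)) \<in> interlacing (Suc m) k"
proof -
  let ?k' = "k(Suc m := k (Suc m) - 1)"
  have z: "\<forall>j. (j = 0 \<or> m < j) \<longrightarrow> l j = 0"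
    and b: "\<forall>j. 1 \<le> j \<longrightarrow> j \<le> m \<longrightarrow> ?k' j \<le> l j \<and> l j \<le> ?k' (Suc j)"
    and s: "\<forall>j. 1 \<le> j \<longrightarrow> j < m \<longrightarrow> l j < l (Suc j)"
    using assms(2) unfolding interlacing_def by auto
  have kk: "k (Suc m) \<le> k (Suc (Suc m))" using assms(1) unfolding almost_strict_def by auto
  show ?thesis unfolding interlacing_def
  proof (intro CollectI conjI allI impI)
    fix j assume j: "1 \<le> j" "j < Suc m"
    show "(l(Suc m := k (Suc m))) j < (l(Suc m := k (Suc m))) (Suc j)"
      using b s j by (cases "j = m") fastforce+
  next
    fix j assume j: "1 \<le> j" "j \<le> Suc m"
    show "k j \<le> (l(Suc m := k (Suc m))) j"
      using b j by (cases "j = Suc m") auto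
    show "(l(Suc m := k (Suc m))) j \<le> k (Suc j)"
      using b j kk by (cases "j = Suc m"; cases "j = m") auto
  qed (use z in auto)
qed

lemma interlacing_Suc:
  assumes "almost_strict (Suc m) k"
  shows "interlacing (Suc m) k =
    (\<lambda>(l, v). l(Suc m := v)) ` (interlacing m k \<times> {k (Suc m) + 1 .. k (Suc (Suc m))}) \<union>
    (\<lambda>l. l(Suc m := k (Suc m))) ` interlacing m (k(Suc m := k (Suc m) - 1))"
  using interlacing_Suc_subset fun_upd_in_interlacing_Suc_above
    fun_upd_in_interlacing_Suc_last[OF assms] by (intro equalityI) auto

lemma finite_interlacing: "almost_strict m k \<Longrightarrow> finite (interlacing m k)"
proof (induction m arbitrary: k)
  case (Suc m)
  have "finite (interlacing m k)" "finite (interlacing m (k(Suc m := k (Suc m) - 1)))"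
    using Suc.IH[OF almost_strict_Suc_D1[OF Suc.prems]] Suc.IH[OF almost_strict_Suc_D2[OF Suc.prems]] .
  then show ?case unfolding interlacing_Suc[OF Suc.prems]
    by (intro finite_UnI finite_imageI finite_cartesian_product finite_atLeastAtMost_int)
qed (simp add: interlacing_0)

lemma interlacing_fun_upd_inject:
  assumes "l \<in> interlacing m k" "l' \<in> interlacing m k'" "l(Suc m := v) = l'(Suc m := v')"
  shows "l = l' \<and> v = v'"
proof
  show "l = l'"
  proof
    fix j show "l j = l' j"
      using fun_cong[OF assms(3), of j] interlacing_zero[OF assms(1)] interlacing_zero[OF assms(2)]
      by (cases "j = Suc m") auto
  qed
  show "v = v'" using fun_cong[OF assms(3), of "Suc m"] by simp
qed

lemma sum_interlacing_Suc:
  assumes "almost_strict (Suc m) k"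
  shows "(\<Sum>l\<in>interlacing (Suc m) k. F l) =
    (\<Sum>l\<in>interlacing m k. \<Sum>v\<in>{k (Suc m) + 1 .. k (Suc (Suc m))}. F (l(Suc m := v))) +
    (\<Sum>l\<in>interlacing m (k(Suc m := k (Suc m) - 1)). F (l(Suc m := k (Suc m))))"
proof -
  let ?k' = "k(Suc m := k (Suc m) - 1)" and ?I = "{k (Suc m) + 1 .. k (Suc (Suc m))}"
  let ?A = "(\<lambda>(l, v). l(Suc m := v)) ` (interlacing m k \<times> ?I)"
  let ?B = "(\<lambda>l. l(Suc m := k (Suc m))) ` interlacing m ?k'"
  have fin: "finite (interlacing m k)" "finite (interlacing m ?k')"
    using finite_interlacing almost_strict_Suc_D1[OF assms] almost_strict_Suc_D2[OF assms] by auto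
  have inj1: "inj_on (\<lambda>(l, v). l(Suc m := v)) (interlacing m k \<times> ?I)"
    by (auto intro!: inj_onI dest: interlacing_fun_upd_inject)
  have inj2: "inj_on (\<lambda>l. l(Suc m := k (Suc m))) (interlacing m ?k')"
    by (auto intro!: inj_onI dest: interlacing_fun_upd_inject)
  have "l (Suc m) \<ge> k (Suc m) + 1" if "l \<in> ?A" for l using that by auto
  moreover have "l (Suc m) = k (Suc m)" if "l \<in> ?B" for l using that by auto
  ultimately have "?A \<inter> ?B = {}" by fastforce
  then have "(\<Sum>l\<in>interlacing (Suc m) k. F l) = (\<Sum>l\<in>?A. F l) + (\<Sum>l\<in>?B. F l)"
    unfolding interlacing_Suc[OF assms] using fin by (intro sum.union_disjoint) auto
  also have "(\<Sum>l\<in>?A. F l) = (\<Sum>(l, v)\<in>interlacing m k \<times> ?I. F (l(Suc m := v)))"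
    by (subst sum.reindex[OF inj1]) (simp add: case_prod_beta comp_def)
  also have "\<dots> = (\<Sum>l\<in>interlacing m k. \<Sum>v\<in>?I. F (l(Suc m := v)))"
    by (rule sum.cartesian_product[symmetric])
  also have "(\<Sum>l\<in>?B. F l) = (\<Sum>l\<in>interlacing m ?k'. F (l(Suc m := k (Suc m))))"
    by (subst sum.reindex[OF inj2]) (simp add: comp_def)
  finally show ?thesis .
qed

text \<open>The Laplace term for row t + 1 of the Vandermonde product ends up evaluated at this point.\<close>
definition omit_entry :: "nat \<Rightarrow> (nat \<Rightarrow> int) \<Rightarrow> nat \<Rightarrow> int" where
  "omit_entry t k = (\<lambda>j. if j \<le> t then k j else k (Suc j) + 1)"

definition antisym_cond :: "nat \<Rightarrow> cfun \<Rightarrow> bool" where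
  "antisym_cond m G \<longleftrightarrow>
     (\<forall>i x. 1 \<le> i \<longrightarrow> i < m \<longrightarrow> x i = x (Suc i) \<longrightarrow> id_plus_ED i (Suc i) G x = 0)"

definition diff_last_at :: "nat \<Rightarrow> complex \<Rightarrow> cfun \<Rightarrow> cfun" where
  "diff_last_at m c G = (\<lambda>x. diffD (Suc m) G (x(Suc m := c)))"

lemma diff_last_at_apply: "diff_last_at m c G x = G (x(Suc m := c + 1)) - G (x(Suc m := c))"
  by (simp add: diff_last_at_def diffD_def shiftE_def)

lemma diff_first_fun_upd: "m < M \<Longrightarrow> diff_first m H (x(M := c)) = diff_first m (\<lambda>y. H (y(M := c))) x"
proof (induction m arbitrary: H x)
  case (Suc m)
  have e: "(\<lambda>y. diffD (Suc m) H (y(M := c))) = diffD (Suc m) (\<lambda>y. H (y(M := c)))"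
    using Suc.prems by (auto simp: diffD_def shiftE_def fun_upd_twist)
  have "diff_first (Suc m) H (x(M := c)) = diff_first m (diffD (Suc m) H) (x(M := c))" by simp
  also have "\<dots> = diff_first m (\<lambda>y. diffD (Suc m) H (y(M := c))) x"
    by (rule Suc.IH) (use Suc.prems in simp)
  also have "\<dots> = diff_first (Suc m) (\<lambda>y. H (y(M := c))) x" by (simp add: e)
  finally show ?case .
qed simp

lemma diff_first_Suc_fun_upd:
  "diff_first (Suc m) G (x(Suc m := c)) = diff_first m (diff_last_at m c G) x"
  by (simp add: diff_first_fun_upd diff_last_at_def)

lemma depends_on_first_diff_last_at:
  assumes "depends_on_first (Suc m) G"
  shows "depends_on_first m (diff_last_at m c G)"
  unfolding depends_on_first_def diff_last_at_def
proof (intro allI impI)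
  fix x y :: "nat \<Rightarrow> complex" assume "\<forall>i\<in>{1..m}. x i = y i"
  then have "\<forall>i\<in>{1..Suc m}. (x(Suc m := c)) i = (y(Suc m := c)) i" by auto
  then show "diffD (Suc m) G (x(Suc m := c)) = diffD (Suc m) G (y(Suc m := c))"
    using depends_on_first_diffD[OF assms] unfolding depends_on_first_def by blast
qed

lemma antisym_cond_diff_last_at:
  assumes "antisym_cond (Suc m) G"
  shows "antisym_cond m (diff_last_at m c G)"
  unfolding antisym_cond_def
proof (intro allI impI)
  fix i and x :: "nat \<Rightarrow> complex" assume i: "1 \<le> i" "i < m" and xi: "x i = x (Suc i)"
  have W0: "id_plus_ED i (Suc i) G y = 0" if "y i = y (Suc i)" for y
    using assms i that unfolding antisym_cond_def by auto
  have "id_plus_ED i (Suc i) (diff_last_at m c G) x =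
      id_plus_ED i (Suc i) G (x(Suc m := c + 1)) - id_plus_ED i (Suc i) G (x(Suc m := c))"
    using i by (simp add: id_plus_ED_def diff_last_at_def diffD_def shiftE_def fun_upd_twist algebra_simps)
  also have "\<dots> = 0" using W0[of "x(Suc m := c + 1)"] W0[of "x(Suc m := c)"] i xi by simp
  finally show "id_plus_ED i (Suc i) (diff_last_at m c G) x = 0" .
qed

lemma antisym_cond_step:
  assumes "antisym_cond (Suc m) G" "1 \<le> m" "z m = a" "z (Suc m) = a"
  shows "G (z(Suc m := a + 1)) - G z = G (z(m := a + 1, Suc m := a + 1))"
proof -
  have "id_plus_ED m (Suc m) G z = 0" using assms unfolding antisym_cond_def by auto
  then show ?thesis
    using assms(3,4) by (simp add: id_plus_ED_def diffD_def shiftE_def fun_upd_twist algebra_simps)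
qed

lemma sum_int_telescope:
  fixes f :: "int \<Rightarrow> complex"
  assumes "a \<le> b + 1"
  shows "(\<Sum>v\<in>{a..b}. f (v + 1) - f v) = f (b + 1) - f a"
proof -
  have "(\<Sum>v\<in>{a..a + int n - 1}. f (v + 1) - f v) = f (a + int n) - f a" for n
  proof (induction n)
    case (Suc n)
    have "{a..a + int (Suc n) - 1} = insert (a + int n) {a..a + int n - 1}" by auto
    then show ?case using Suc by (simp add: algebra_simps)
  qed simp
  from this[of "nat (b + 1 - a)"] show ?thesis using assms by simp
qed

lemma sum_diff_last_at_omit_entry:
  assumes "t \<le> m" "k (Suc m) \<le> k (Suc (Suc m))"
  shows "(\<Sum>v\<in>{k (Suc m) + 1 .. k (Suc (Suc m))}. diff_last_at m (of_int v) G (of_int_vec (omit_entry t k))) =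
    G (of_int_vec (omit_entry t k)) - G ((of_int_vec (omit_entry t k))(Suc m := of_int (k (Suc m)) + 1))"
proof -
  let ?P = "of_int_vec (omit_entry t k)"
  have "(\<Sum>v\<in>{k (Suc m) + 1 .. k (Suc (Suc m))}. diff_last_at m (of_int v) G ?P) =
      (\<Sum>v\<in>{k (Suc m) + 1 .. k (Suc (Suc m))}. G (?P(Suc m := of_int (v + 1))) - G (?P(Suc m := of_int v)))"
    by (simp add: diff_last_at_apply)
  also have "\<dots> = G (?P(Suc m := of_int (k (Suc (Suc m)) + 1))) - G (?P(Suc m := of_int (k (Suc m) + 1)))"
    using sum_int_telescope[of "k (Suc m) + 1" "k (Suc (Suc m))" "\<lambda>v. G (?P(Suc m := of_int v))"] assms(2)
    by simp
  also have "?P(Suc m := of_int (k (Suc (Suc m)) + 1)) = ?P"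
    using assms(1) by (auto simp: of_int_vec_def omit_entry_def)
  finally show ?thesis by (simp only: of_int_add of_int_1)
qed

lemma omit_entry_cancel:
  fixes k :: "nat \<Rightarrow> int"
  assumes "antisym_cond (Suc m) G" "t < m"
  defines "k' \<equiv> k(Suc m := k (Suc m) - 1)" and "a \<equiv> (of_int (k (Suc m)) :: complex)"
  shows "G ((of_int_vec (omit_entry t k'))(Suc m := a + 1)) - G ((of_int_vec (omit_entry t k'))(Suc m := a)) =
    G ((of_int_vec (omit_entry t k))(Suc m := a + 1))"
proof -
  define z where "z = (of_int_vec (omit_entry t k'))(Suc m := a)"
  have "z m = a" "z (Suc m) = a"
    using assms(2) by (simp_all add: z_def of_int_vec_def omit_entry_def k'_def a_def)
  then have "G (z(Suc m := a + 1)) - G z = G (z(m := a + 1, Suc m := a + 1))"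
    using assms(2) by (intro antisym_cond_step[OF assms(1)]) simp_all
  moreover have "z(m := a + 1, Suc m := a + 1) = (of_int_vec (omit_entry t k))(Suc m := a + 1)"
    using assms(2) by (auto simp: z_def of_int_vec_def omit_entry_def k'_def a_def)
  ultimately show ?thesis by (simp add: z_def)
qed

text \<open>After telescoping in the last coordinate, the antisymmetry condition makes the boundary
  terms for t < m cancel, and only the one for t = m survives.\<close>
lemma alternating_sum_Suc:
  assumes "depends_on_first (Suc m) G" "antisym_cond (Suc m) G" "k (Suc m) \<le> k (Suc (Suc m))"
  defines "k' \<equiv> k(Suc m := k (Suc m) - 1)"
  shows "(\<Sum>v\<in>{k (Suc m) + 1 .. k (Suc (Suc m))}.
           \<Sum>t\<le>m. (-1)^t * diff_last_at m (of_int v) G (of_int_vec (omit_entry t k))) +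
      (\<Sum>t\<le>m. (-1)^t * diff_last_at m (of_int (k (Suc m))) G (of_int_vec (omit_entry t k'))) =
    (\<Sum>t\<le>Suc m. (-1)^t * G (of_int_vec (omit_entry t k)))"
proof -
  define a where "a = (of_int (k (Suc m)) :: complex)"
  define I where "I = {k (Suc m) + 1 .. k (Suc (Suc m))}"
  define P where "P t = of_int_vec (omit_entry t k)" for t
  define Q where "Q t = of_int_vec (omit_entry t k')" for t
  define D where "D t = G ((Q t)(Suc m := a + 1)) - G ((Q t)(Suc m := a)) - G ((P t)(Suc m := a + 1))" for t
  have D_less: "D t = 0" if "t < m" for t
    using omit_entry_cancel[OF assms(2) that] by (simp add: D_def P_def Q_def a_def k'_def)
  have "Q m = P m" by (auto simp: Q_def P_def of_int_vec_def omit_entry_def k'_def)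
  moreover have "G ((P m)(Suc m := a)) = G (P (Suc m))"
    by (rule depends_on_firstD[OF assms(1)]) (auto simp: P_def of_int_vec_def omit_entry_def a_def)
  ultimately have D_m: "D m = - G (P (Suc m))" by (simp add: D_def)
  have "(\<Sum>v\<in>I. \<Sum>t\<le>m. (-1)^t * diff_last_at m (of_int v) G (P t)) =
      (\<Sum>t\<le>m. (-1)^t * (\<Sum>v\<in>I. diff_last_at m (of_int v) G (P t)))"
    by (simp add: sum.swap[of _ I] sum_distrib_left)
  also have "\<dots> = (\<Sum>t\<le>m. (-1)^t * (G (P t) - G ((P t)(Suc m := a + 1))))"
    unfolding I_def P_def a_def using assms(3) by (simp add: sum_diff_last_at_omit_entry)
  finally have "(\<Sum>v\<in>I. \<Sum>t\<le>m. (-1)^t * diff_last_at m (of_int v) G (P t)) +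
      (\<Sum>t\<le>m. (-1)^t * diff_last_at m a G (Q t)) =
      (\<Sum>t\<le>m. (-1)^t * G (P t)) + (\<Sum>t\<le>m. (-1)^t * D t)"
    by (simp add: diff_last_at_apply D_def sum.distrib[symmetric] algebra_simps)
  also have "(\<Sum>t\<le>m. (-1)^t * D t) = (-1)^Suc m * G (P (Suc m))"
    using D_less D_m by (simp add: lessThan_Suc_atMost[symmetric])
  finally show ?thesis by (simp add: I_def P_def Q_def a_def)
qed

lemma sum_interlacing_diff_first:
  assumes "almost_strict m k" "depends_on_first m G" "antisym_cond m G"
  shows "(\<Sum>l\<in>interlacing m k. diff_first m G (of_int_vec l)) =
    (\<Sum>t\<le>m. (-1)^t * G (of_int_vec (omit_entry t k)))"
  using assms
proof (induction m arbitrary: G k)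
  case 0
  have "G (of_int_vec (\<lambda>_. 0)) = G (of_int_vec (omit_entry 0 k))"
    by (rule depends_on_firstD[OF "0.prems"(2)]) simp
  then show ?case by (simp add: interlacing_0)
next
  case (Suc m)
  define k' where "k' = k(Suc m := k (Suc m) - 1)"
  define I where "I = {k (Suc m) + 1 .. k (Suc (Suc m))}"
  note IH = Suc.IH[OF _ depends_on_first_diff_last_at[OF Suc.prems(2)] antisym_cond_diff_last_at[OF Suc.prems(3)]]
  have "(\<Sum>l\<in>interlacing (Suc m) k. diff_first (Suc m) G (of_int_vec l)) =
      (\<Sum>l\<in>interlacing m k. \<Sum>v\<in>I. diff_first m (diff_last_at m (of_int v) G) (of_int_vec l)) +
      (\<Sum>l\<in>interlacing m k'. diff_first m (diff_last_at m (of_int (k (Suc m))) G) (of_int_vec l))"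
    unfolding sum_interlacing_Suc[OF Suc.prems(1)] I_def k'_def
    by (simp only: of_int_vec_fun_upd diff_first_Suc_fun_upd)
  also have "\<dots> = (\<Sum>v\<in>I. \<Sum>t\<le>m. (-1)^t * diff_last_at m (of_int v) G (of_int_vec (omit_entry t k))) +
      (\<Sum>t\<le>m. (-1)^t * diff_last_at m (of_int (k (Suc m))) G (of_int_vec (omit_entry t k')))"
    using IH[OF almost_strict_Suc_D1[OF Suc.prems(1)]] IH[OF almost_strict_Suc_D2[OF Suc.prems(1)], folded k'_def]
    by (simp add: sum.swap[of _ I])
  also have "\<dots> = (\<Sum>t\<le>Suc m. (-1)^t * G (of_int_vec (omit_entry t k)))"
    unfolding I_def k'_def using Suc.prems unfolding almost_strict_def
    by (intro alternating_sum_Suc) auto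
  finally show ?case .
qed

section \<open>Applying the operator to the Vandermonde product\<close>

lemma shift_invariant_inv_series_list_commute:
  "shift_invariant L \<Longrightarrow> L (inv_series_list N ps f) = inv_series_list N ps (L f)"
  by (induction ps) (simp_all add: inv_series_list_Cons shift_invariant_inv_series_commute)

lemma depends_on_first_det_binom_mat: "depends_on_first m (\<lambda>x. det (binom_mat m c e x))"
proof -
  have "binom_mat m c e x = binom_mat m c e y" if "\<forall>i\<in>{1..m}. x i = y i" for x y
    unfolding binom_mat_def using that by (intro eq_matI) auto
  then show ?thesis unfolding depends_on_first_def by metis
qed

lemma mset_transpose_index_pairs:
  assumes "1 \<le> i" "i < m"
  defines "\<tau> \<equiv> Transposition.transpose i (Suc i)"
  shows "mset (map (\<lambda>(p, q). (\<tau> p, \<tau> q)) (remove1 (i, Suc i) (index_pairs m))) =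
    mset (remove1 (i, Suc i) (index_pairs m))"
proof -
  let ?f = "\<lambda>(p, q). (\<tau> p, \<tau> q)"
  let ?R = "remove1 (i, Suc i) (index_pairs m)"
  have set_R: "set ?R = {(p, q). 1 \<le> p \<and> p < q \<and> q \<le> m} - {(i, Suc i)}"
    using distinct_index_pairs by (simp add: set_index_pairs)
  have ff: "?f (?f y) = y" for y by (cases y) (simp add: \<tau>_def)
  have dR: "distinct ?R" using distinct_index_pairs by simp
  have "inj ?f" by (rule injI) (metis ff)
  then have "inj_on ?f (set ?R)" by (rule inj_on_subset) simp
  then have d2: "distinct (map ?f ?R)" using dR by (simp add: distinct_map)
  have sub: "?f ` set ?R \<subseteq> set ?R"
    unfolding set_R using assms(1,2) by (auto simp: \<tau>_def Transposition.transpose_def split: if_splits)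
  then have "?f ` ?f ` set ?R \<subseteq> ?f ` set ?R" by (rule image_mono)
  then have "set ?R \<subseteq> ?f ` set ?R" by (simp add: image_image ff)
  with sub have "set (map ?f ?R) = set ?R" by auto
  then show ?thesis using set_eq_iff_mset_eq_distinct[OF d2 dR] by simp
qed

text \<open>Applying id + E_(i+1) Delta_i cancels the factor of the pair (i, i+1); the rest is
  antisymmetric under the exchange of x_i and x_(i+1), hence vanishes where they agree.\<close>
lemma antisym_cond_inv_series_list_det:
  assumes "degrees_below N (\<lambda>x. det (binom_mat m 0 Suc x))"
  shows "antisym_cond m (inv_series_list N (index_pairs m) (\<lambda>x. det (binom_mat m 0 Suc x)))"
  unfolding antisym_cond_def
proof (intro allI impI)
  fix i and x :: "nat \<Rightarrow> complex"
  assume i: "1 \<le> i" "i < m" and xi: "x i = x (Suc i)"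
  define \<tau> where "\<tau> = Transposition.transpose i (Suc i)"
  let ?U = "\<lambda>x. det (binom_mat m 0 Suc x)"
  let ?R = "remove1 (i, Suc i) (index_pairs m)"
  let ?F = "inv_series_list N ?R ?U"
  have "(i, Suc i) \<in> set (index_pairs m)" using i by (simp add: set_index_pairs)
  then have W: "id_plus_ED i (Suc i) (inv_series_list N (index_pairs m) ?U) = ?F"
    by (rule id_plus_ED_inv_series_list[OF assms])
  have rU: "rename_vars \<tau> ?U = (\<lambda>x. (-1) * ?U x)"
    by (rule ext) (simp add: rename_vars_def \<tau>_def det_binom_mat_transpose[OF i])
  have L: "linear_op (inv_series_list N (map (\<lambda>(p, q). (\<tau> p, \<tau> q)) ?R))"
    by (rule shift_invariant_linear_op[OF shift_invariant_inv_series_list])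
  have "rename_vars \<tau> ?F = inv_series_list N (map (\<lambda>(p, q). (\<tau> p, \<tau> q)) ?R) (rename_vars \<tau> ?U)"
    by (rule inv_series_list_rename_vars[symmetric]) (simp add: \<tau>_def inj_transpose)
  also have "\<dots> = (\<lambda>x. (-1) * inv_series_list N (map (\<lambda>(p, q). (\<tau> p, \<tau> q)) ?R) ?U x)"
    unfolding rU by (rule linear_op_cmult[OF L])
  also have "inv_series_list N (map (\<lambda>(p, q). (\<tau> p, \<tau> q)) ?R) ?U = ?F"
    unfolding \<tau>_def by (rule inv_series_list_mset[OF mset_transpose_index_pairs[OF i]])
  finally have rF: "rename_vars \<tau> ?F = (\<lambda>x. - ?F x)" by simp
  have "x \<circ> \<tau> = x" using xi by (auto simp: \<tau>_def Transposition.transpose_def)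
  then have "?F x = - ?F x" using fun_cong[OF rF, of x] by (simp add: rename_vars_def)
  then show "id_plus_ED i (Suc i) (inv_series_list N (index_pairs m) ?U) x = 0" using W by simp
qed

lemma index_pairs_Suc_mset:
  assumes s: "1 \<le> s" "s \<le> Suc m"
  shows "mset (index_pairs (Suc m)) =
    mset (map (\<lambda>p. (p, s)) [1..<s] @ map (\<lambda>q. (s, q)) [Suc s..<Suc (Suc m)] @
      map (\<lambda>(p, q). (skip s p, skip s q)) (index_pairs m))"
proof -
  let ?A = "map (\<lambda>p. (p, s)) [1..<s]"
  let ?B = "map (\<lambda>q. (s, q)) [Suc s..<Suc (Suc m)]"
  let ?f = "\<lambda>(p, q). (skip s p, skip s q)"
  let ?C = "map ?f (index_pairs m)"
  have "inj ?f" using inj_skip by (auto simp: inj_def inj_eq)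
  then have "inj_on ?f (set (index_pairs m))" by (rule inj_on_subset) simp
  then have dC: "distinct ?C" using distinct_index_pairs by (simp add: distinct_map)
  have setC: "set ?C = {(skip s p, skip s q) | p q. 1 \<le> p \<and> p < q \<and> q \<le> m}"
    by (auto simp: set_index_pairs)
  have d: "distinct (?A @ ?B @ ?C)"
    using dC unfolding distinct_append set_append setC
    by (auto simp: distinct_map inj_on_def skip_def)
  have "set (?A @ ?B @ ?C) \<subseteq> set (index_pairs (Suc m))"
    using s unfolding set_append setC by (auto simp: set_index_pairs skip_def)
  moreover have "set (index_pairs (Suc m)) \<subseteq> set (?A @ ?B @ ?C)"
  proof
    fix y assume "y \<in> set (index_pairs (Suc m))"
    then obtain p q where y: "y = (p, q)" "1 \<le> p" "p < q" "q \<le> Suc m" by (auto simp: set_index_pairs)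
    show "y \<in> set (?A @ ?B @ ?C)"
    proof (cases "q = s \<or> p = s")
      case False
      define p' where "p' = (if p < s then p else p - 1)"
      define q' where "q' = (if q < s then q else q - 1)"
      have "skip s p' = p" "skip s q' = q" "1 \<le> p'" "p' < q'" "q' \<le> m"
        using y False s unfolding p'_def q'_def skip_def by auto
      then have "y \<in> set ?C" unfolding setC using y by blast
      then show ?thesis by simp
    qed (use y in auto)
  qed
  ultimately have "set (index_pairs (Suc m)) = set (?A @ ?B @ ?C)" by (rule equalityI[rotated])
  then show ?thesis by (rule set_eq_iff_mset_eq_distinct[OF distinct_index_pairs d, THEN iffD1])
qed

text \<open>On a function not depending on x_s, the factors for the pairs (s, q) act trivially and
  those for the pairs (p, s) act as the inverse shifts E_p^(-1).\<close>
lemma inv_series_list_rename_skip: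
  assumes s: "1 \<le> s" "s \<le> Suc m" and f: "degrees_below N f" and N: "N \<ge> 1"
  shows "inv_series_list N (index_pairs (Suc m)) (rename_vars (skip s) f) y =
    inv_series_list N (index_pairs m) f ((\<lambda>i. y i - (if i \<in> set [1..<s] then 1 else 0)) \<circ> skip s)"
proof -
  let ?A = "map (\<lambda>p. (p, s)) [1..<s]"
  let ?B = "map (\<lambda>q. (s, q)) [Suc s..<Suc (Suc m)]"
  let ?C = "map (\<lambda>(p, q). (skip s p, skip s q)) (index_pairs m)"
  define h where "h = rename_vars (skip s) (inv_series_list N (index_pairs m) f)"
  have hs: "shiftE s h = h" unfolding h_def by (rule shiftE_rename_vars_outside) (auto simp: skip_def)
  have "inv_series_list N (index_pairs (Suc m)) (rename_vars (skip s) f) =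
      inv_series_list N (?A @ ?B @ ?C) (rename_vars (skip s) f)"
    by (rule inv_series_list_mset[OF index_pairs_Suc_mset[OF s]])
  also have "\<dots> = inv_series_list N ?A (inv_series_list N ?B h)"
    by (simp add: inv_series_list_append inv_series_list_rename_vars[OF inj_skip] h_def)
  also have "inv_series_list N ?B h = h" by (rule inv_series_list_const_var[OF N hs]) auto
  finally have Z: "inv_series_list N (index_pairs (Suc m)) (rename_vars (skip s) f) =
      inv_series_list N ?A h" .
  have "degrees_below N h"
    unfolding h_def by (rule degrees_below_rename_vars[OF inj_skip degrees_below_inv_series_list[OF f] N])
  then have sh: "shift_vars [1..<s] (inv_series_list N ?A h) = h"
    by (intro shift_vars_inv_series_list_const_var[OF _ hs]) simp_all
  define e where "e i = (if i \<in> set [1..<s] then 1 else (0::complex))" for i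
  have "inv_series_list N ?A h y = shift_vars [1..<s] (inv_series_list N ?A h) (\<lambda>i. y i - e i)"
    by (simp add: shift_vars_apply e_def)
  also have "\<dots> = h (\<lambda>i. y i - e i)" by (simp only: sh)
  finally show ?thesis using Z by (simp add: h_def rename_vars_def e_def)
qed

text \<open>A common bound for the degrees of all functions of at most m + 1 variables occurring below.\<close>
definition deg_bound :: "nat \<Rightarrow> nat" where
  "deg_bound m = Suc (Suc m) * Suc m + 1"

lemma degrees_below_det_binom_mat_Suc: "degrees_below (deg_bound m) (\<lambda>x. det (binom_mat m c Suc x))"
  by (rule degrees_below_mono[OF degrees_below_det_binom_mat[of m Suc m]]) (simp_all add: deg_bound_def)

lemma degrees_below_vdm_poly:
  assumes "m' \<le> Suc m"
  shows "degrees_below (deg_bound m) (vdm_poly m')"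
proof -
  have "Suc (Suc m) * m' + 1 \<le> deg_bound m"
    using assms unfolding deg_bound_def by (intro add_le_mono1 mult_le_mono2)
  moreover have "degrees_below (Suc (Suc m) * m' + 1) (\<lambda>x. det (binom_mat m' 0 (\<lambda>j. j) x))"
    by (rule degrees_below_det_binom_mat) (use assms in simp)
  ultimately have "degrees_below (deg_bound m) (\<lambda>x. det (binom_mat m' 0 (\<lambda>j. j) x))"
    using degrees_below_mono by blast
  then show ?thesis by (simp add: det_binom_mat_eq_vdm_poly fun_eq_iff[symmetric])
qed

text \<open>Delta_1 ... Delta_m maps the determinant here to the Vandermonde product.\<close>
definition reduced_det :: "nat \<Rightarrow> cfun" where
  "reduced_det m = inv_series_list (deg_bound m) (index_pairs m) (\<lambda>x. det (binom_mat m 0 Suc x))"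

lemma inv_series_list_Laplace_term:
  assumes "i \<le> m"
  shows "inv_series_list (deg_bound m) (index_pairs (Suc m))
      (rename_vars (skip (Suc i)) (\<lambda>x. det (binom_mat m 1 Suc x))) (of_int_vec k) =
    reduced_det m (of_int_vec (omit_entry i k))"
proof -
  define z where "z = (\<lambda>j. of_int_vec k j - (if j \<in> set [1..<Suc i] then 1 else 0)) \<circ> skip (Suc i)"
  have "binom_mat m 0 Suc (\<lambda>i. x i + (if i \<in> set [1..<Suc m] then 1 else 0)) = binom_mat m 1 Suc x"
    for x unfolding binom_mat_def by (intro eq_matI) auto
  then have "(\<lambda>x. det (binom_mat m 1 Suc x)) = shift_vars [1..<Suc m] (\<lambda>x. det (binom_mat m 0 Suc x))"
    by (simp add: shift_vars_apply fun_eq_iff)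
  then have "inv_series_list (deg_bound m) (index_pairs m) (\<lambda>x. det (binom_mat m 1 Suc x)) =
      shift_vars [1..<Suc m] (reduced_det m)"
    by (simp add: reduced_det_def shift_invariant_shift_vars_commute[OF shift_invariant_inv_series_list])
  then have "inv_series_list (deg_bound m) (index_pairs (Suc m))
      (rename_vars (skip (Suc i)) (\<lambda>x. det (binom_mat m 1 Suc x))) (of_int_vec k) =
      reduced_det m (\<lambda>j. z j + (if j \<in> set [1..<Suc m] then 1 else 0))"
    using inv_series_list_rename_skip[OF _ _ degrees_below_det_binom_mat_Suc, of "Suc i"] assms
    by (simp add: shift_vars_apply z_def deg_bound_def)
  also have "\<dots> = reduced_det m (of_int_vec (omit_entry i k))"
    unfolding reduced_det_def
    by (rule depends_on_firstD[OF depends_on_first_inv_series_list[OF depends_on_first_det_binom_mat]])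
      (auto simp: z_def of_int_vec_def omit_entry_def skip_def)
  finally show ?thesis .
qed

lemma all_inv_ops_vdm_poly_Suc:
  "all_inv_ops (Suc m) (vdm_poly (Suc m)) (of_int_vec k) =
    (\<Sum>t\<le>m. (-1)^t * reduced_det m (of_int_vec (omit_entry t k)))"
proof -
  let ?U1 = "\<lambda>x. det (binom_mat m 1 Suc x)"
  let ?L = "inv_series_list (deg_bound m) (index_pairs (Suc m))"
  have L: "linear_op ?L" by (rule shift_invariant_linear_op[OF shift_invariant_inv_series_list])
  have V: "vdm_poly (Suc m) = (\<lambda>x. \<Sum>t\<le>m. (-1)^t * rename_vars (skip (Suc t)) ?U1 x)"
    by (rule ext) (simp add: vdm_poly_Laplace rename_vars_def lessThan_Suc_atMost)
  have "all_inv_ops (Suc m) (vdm_poly (Suc m)) = ?L (vdm_poly (Suc m))"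
    by (rule all_inv_ops_eq_inv_series_list[OF degrees_below_vdm_poly]) simp
  also have "\<dots> = (\<lambda>x. \<Sum>t\<le>m. ?L (\<lambda>x. (-1)^t * rename_vars (skip (Suc t)) ?U1 x) x)"
    unfolding V by (rule linear_op_sum[OF L])
  also have "\<dots> = (\<lambda>x. \<Sum>t\<le>m. (-1)^t * ?L (rename_vars (skip (Suc t)) ?U1) x)"
    by (simp only: linear_op_cmult[OF L])
  finally show ?thesis by (simp add: inv_series_list_Laplace_term)
qed

lemma sum_interlacing_all_inv_ops:
  assumes "almost_strict m k"
  shows "(\<Sum>l\<in>interlacing m k. all_inv_ops m (vdm_poly m) (of_int_vec l)) =
    (\<Sum>t\<le>m. (-1)^t * reduced_det m (of_int_vec (omit_entry t k)))"
proof -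
  let ?U0 = "\<lambda>x. det (binom_mat m 0 Suc x)"
  have "diff_first m (reduced_det m) = inv_series_list (deg_bound m) (index_pairs m) (diff_first m ?U0)"
    unfolding reduced_det_def
    by (rule shift_invariant_inv_series_list_commute[OF shift_invariant_diff_first])
  also have "\<dots> = all_inv_ops m (vdm_poly m)"
    using all_inv_ops_eq_inv_series_list[OF degrees_below_vdm_poly[of m m]]
    by (simp add: diff_first_det_binom_mat det_binom_mat_eq_vdm_poly fun_eq_iff[symmetric])
  finally have "diff_first m (reduced_det m) = all_inv_ops m (vdm_poly m)" .
  moreover have "depends_on_first m (reduced_det m)"
    unfolding reduced_det_def by (rule depends_on_first_inv_series_list[OF depends_on_first_det_binom_mat])
  moreover have "antisym_cond m (reduced_det m)"
    unfolding reduced_det_def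
    by (rule antisym_cond_inv_series_list_det[OF degrees_below_det_binom_mat_Suc])
  ultimately show ?thesis using sum_interlacing_diff_first[OF assms, of "reduced_det m"] by simp
qed

section \<open>Counting monotone triangles\<close>

definition strict_row :: "nat \<Rightarrow> (nat \<Rightarrow> int) \<Rightarrow> bool" where
  "strict_row n k \<longleftrightarrow> (\<forall>i. 1 \<le> i \<longrightarrow> i < n \<longrightarrow> k i < k (i + 1))"

lemma interlacing_strict_row: "l \<in> interlacing m k \<Longrightarrow> strict_row m l"
  unfolding interlacing_def strict_row_def by auto

lemma strict_row_Suc_almost_strict: "strict_row (Suc m) k \<Longrightarrow> almost_strict m k"
  unfolding almost_strict_def strict_row_def by auto

lemma monotone_trianglesD:
  assumes "a \<in> monotone_triangles n k"
  shows "\<not> (1 \<le> j \<and> j \<le> i \<and> i \<le> n) \<Longrightarrow> a i j = 0"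
    and "2 \<le> i \<Longrightarrow> i \<le> n \<Longrightarrow> 1 \<le> j \<Longrightarrow> j < i \<Longrightarrow> a i j \<le> a (i - 1) j \<and> a (i - 1) j \<le> a i (j + 1)"
    and "i \<le> n \<Longrightarrow> 1 \<le> j \<Longrightarrow> j < i \<Longrightarrow> a i j < a i (j + 1)"
    and "1 \<le> j \<Longrightarrow> j \<le> n \<Longrightarrow> a n j = k j"
  using assms unfolding monotone_triangles_def monotone_triangle_def by auto

lemma monotone_triangles_1: "monotone_triangles 1 k = {\<lambda>i j. if i = 1 \<and> j = 1 then k 1 else 0}"
proof (intro equalityI subsetI)
  fix a assume a: "a \<in> monotone_triangles 1 k"
  have "a i j = (if i = 1 \<and> j = 1 then k 1 else 0)" for i j
    using monotone_trianglesD(1)[OF a, of j i] monotone_trianglesD(4)[OF a, of j]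
    by (cases "i = 1 \<and> j = 1") auto
  then show "a \<in> {\<lambda>i j. if i = 1 \<and> j = 1 then k 1 else 0}" by auto
qed (auto simp: monotone_triangles_def monotone_triangle_def)

context
  fixes m :: nat and k :: "nat \<Rightarrow> int"
  assumes m: "1 \<le> m" and k: "strict_row (Suc m) k"
begin

definition add_bottom_row :: "(nat \<Rightarrow> nat \<Rightarrow> int) \<Rightarrow> nat \<Rightarrow> nat \<Rightarrow> int" where
  "add_bottom_row b = b(Suc m := (\<lambda>j. if 1 \<le> j \<and> j \<le> Suc m then k j else 0))"

lemma monotone_triangles_Suc_D:
  assumes a: "a \<in> monotone_triangles (Suc m) k"
  defines "b \<equiv> a(Suc m := (\<lambda>_. 0))"
  shows "a m \<in> interlacing m k" "b \<in> monotone_triangles m (a m)" "a = add_bottom_row b"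
proof -
  note a = monotone_trianglesD[OF a]
  show "a m \<in> interlacing m k"
    unfolding interlacing_def
  proof (intro CollectI conjI allI impI)
    fix j assume j: "1 \<le> j" "j \<le> m"
    then show "k j \<le> a m j" "a m j \<le> k (Suc j)"
      using a(2)[of "Suc m" j] a(4)[of j] a(4)[of "Suc j"] m by auto
  qed (use a(1,3) in auto)
  show "b \<in> monotone_triangles m (a m)"
    unfolding monotone_triangles_def monotone_triangle_def b_def
    using a(1)[of _ "Suc m"] a(1-3) by auto
  show "a = add_bottom_row b"
    using a(1)[of _ "Suc m"] a(4) by (auto simp: fun_eq_iff add_bottom_row_def b_def)
qed

lemma add_bottom_row_row:
  assumes "l \<in> interlacing m k" "b \<in> monotone_triangles m l"
  shows "add_bottom_row b m = l"
proof
  fix j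
  have "l j = 0" if "j = 0 \<or> m < j" using assms(1) that unfolding interlacing_def by auto
  then show "add_bottom_row b m j = l j"
    using monotone_trianglesD(1)[OF assms(2), of j m] monotone_trianglesD(4)[OF assms(2), of j]
    by (cases "1 \<le> j \<and> j \<le> m") (auto simp: add_bottom_row_def)
qed

lemma add_bottom_row_in_monotone_triangles:
  assumes l: "l \<in> interlacing m k" and b: "b \<in> monotone_triangles m l"
  shows "add_bottom_row b \<in> monotone_triangles (Suc m) k"
proof -
  note b = monotone_trianglesD[OF b]
  have l_bounds: "k j \<le> l j \<and> l j \<le> k (Suc j)" if "1 \<le> j" "j \<le> m" for j
    using l that unfolding interlacing_def by auto
  have interlace: "add_bottom_row b i j \<le> add_bottom_row b (i - 1) j \<and>
      add_bottom_row b (i - 1) j \<le> add_bottom_row b i (j + 1)"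
    if "2 \<le> i" "i \<le> Suc m" "1 \<le> j" "j < i" for i j
  proof (cases "i = Suc m")
    case True
    then show ?thesis using that l_bounds[of j] b(4)[of j] by (simp add: add_bottom_row_def)
  qed (use that b(2)[of i j] in \<open>auto simp: add_bottom_row_def\<close>)
  have strict: "add_bottom_row b i j < add_bottom_row b i (j + 1)"
    if "i \<le> Suc m" "1 \<le> j" "j < i" for i j
    using that k b(3)[of i j] by (cases "i = Suc m") (auto simp: add_bottom_row_def strict_row_def)
  show ?thesis
    unfolding monotone_triangles_def monotone_triangle_def
    using interlace strict b(1) by (auto simp: add_bottom_row_def)
qed

lemma inj_on_add_bottom_row: "inj_on add_bottom_row (monotone_triangles m l)"
proof (rule inj_onI, intro ext)
  fix b b' i j assume b: "b \<in> monotone_triangles m l" and b': "b' \<in> monotone_triangles m l"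
    and e: "add_bottom_row b = add_bottom_row b'"
  show "b i j = b' i j"
    using fun_cong[OF e, of i] monotone_trianglesD(1)[OF b, of j i] monotone_trianglesD(1)[OF b', of j i]
    by (cases "i = Suc m") (auto simp: add_bottom_row_def)
qed

lemma monotone_triangles_Suc:
  "monotone_triangles (Suc m) k = (\<Union>l\<in>interlacing m k. add_bottom_row ` monotone_triangles m l)"
proof (intro equalityI subsetI)
  fix a assume a: "a \<in> monotone_triangles (Suc m) k"
  have "a \<in> add_bottom_row ` monotone_triangles m (a m)"
    by (rule image_eqI[of a add_bottom_row, OF monotone_triangles_Suc_D(3,2)[OF a]])
  then show "a \<in> (\<Union>l\<in>interlacing m k. add_bottom_row ` monotone_triangles m l)"
    by (rule UN_I[OF monotone_triangles_Suc_D(1)[OF a]])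
qed (auto intro: add_bottom_row_in_monotone_triangles)

lemma card_monotone_triangles_Suc:
  assumes fin: "\<And>l. l \<in> interlacing m k \<Longrightarrow> finite (monotone_triangles m l)"
  shows "finite (monotone_triangles (Suc m) k)"
    and "card (monotone_triangles (Suc m) k) = (\<Sum>l\<in>interlacing m k. card (monotone_triangles m l))"
proof -
  have fL: "finite (interlacing m k)"
    by (rule finite_interlacing[OF strict_row_Suc_almost_strict[OF k]])
  then show "finite (monotone_triangles (Suc m) k)"
    unfolding monotone_triangles_Suc using fin by auto
  have "add_bottom_row ` monotone_triangles m l \<inter> add_bottom_row ` monotone_triangles m l' = {}"
    if "l \<in> interlacing m k" "l' \<in> interlacing m k" "l \<noteq> l'" for l l'
    using that add_bottom_row_row by (auto simp: image_iff) metis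
  then have "card (monotone_triangles (Suc m) k) =
      (\<Sum>l\<in>interlacing m k. card (add_bottom_row ` monotone_triangles m l))"
    unfolding monotone_triangles_Suc using fL fin by (intro card_UN_disjoint) auto
  also have "\<dots> = (\<Sum>l\<in>interlacing m k. card (monotone_triangles m l))"
    by (intro sum.cong refl card_image inj_on_add_bottom_row)
  finally show "card (monotone_triangles (Suc m) k) = (\<Sum>l\<in>interlacing m k. card (monotone_triangles m l))" .
qed

end

lemma finite_monotone_triangles: "1 \<le> n \<Longrightarrow> strict_row n k \<Longrightarrow> finite (monotone_triangles n k)"
proof (induction n arbitrary: k rule: nat_induct_at_least)
  case (Suc m)
  then show ?case using card_monotone_triangles_Suc(1) interlacing_strict_row by blast
qed (use monotone_triangles_1 in simp)

lemma all_inv_ops_vdm_poly_recursion: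
  assumes "almost_strict m k"
  shows "all_inv_ops (Suc m) (vdm_poly (Suc m)) (of_int_vec k) =
    (\<Sum>l\<in>interlacing m k. all_inv_ops m (vdm_poly m) (of_int_vec l))"
  by (simp only: all_inv_ops_vdm_poly_Suc sum_interlacing_all_inv_ops[OF assms])

lemma of_nat_card_monotone_triangles:
  "1 \<le> n \<Longrightarrow> strict_row n k \<Longrightarrow>
    of_nat (card (monotone_triangles n k)) = all_inv_ops n (vdm_poly n) (of_int_vec k)"
proof (induction n arbitrary: k rule: nat_induct_at_least)
  case base
  have "all_inv_ops 1 f = f" for f by (simp add: all_inv_ops_def)
  moreover have "vdm_poly 1 = (\<lambda>x. 1)" by (simp add: vdm_poly_def)
  ultimately show ?case using monotone_triangles_1[of k] by simp
next
  case (Suc m)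
  have fin: "finite (monotone_triangles m l)" if "l \<in> interlacing m k" for l
    using finite_monotone_triangles[OF Suc.hyps interlacing_strict_row[OF that]] .
  have "of_nat (card (monotone_triangles (Suc m) k)) =
      (\<Sum>l\<in>interlacing m k. of_nat (card (monotone_triangles m l)) :: complex)"
    using card_monotone_triangles_Suc(2)[OF Suc.hyps(1) Suc.prems fin] by simp
  also have "\<dots> = (\<Sum>l\<in>interlacing m k. all_inv_ops m (vdm_poly m) (of_int_vec l))"
    using Suc.IH interlacing_strict_row by (intro sum.cong) auto
  also have "\<dots> = all_inv_ops (Suc m) (vdm_poly (Suc m)) (of_int_vec k)"
    using all_inv_ops_vdm_poly_recursion[OF strict_row_Suc_almost_strict[OF Suc.prems]] by simp
  finally show ?case .
qed

theorem theorem2: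
  fixes n :: nat and k :: "nat \<Rightarrow> int"
  assumes "n \<ge> 1"
    and "\<And>i. 1 \<le> i \<Longrightarrow> i < n \<Longrightarrow> k i < k (i + 1)"
  shows "of_nat (card (monotone_triangles n k))
         = all_inv_ops n (vdm_poly n) (\<lambda>i. of_int (k i))"
  using of_nat_card_monotone_triangles[OF assms(1)] assms(2) by (simp add: strict_row_def of_int_vec_def)

end
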